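(* Let $(N,J,h)$ be a 2-dimensional almost Norden manifold of constant sectional curvature $k'$ and let $(S^1(N),\varphi,\xi,\eta,g)$ be its $S^1$-solvable extension (constructed as in the context). Then for $(S^1(N),\varphi,\xi,\eta,g)$: (1) the sectional curvatures of the $\xi$-sections are constant; (2) $\tau^*=0$; (3) $\tau^{**}=\tau-4$.
   Context: An almost Norden manifold $(N,J,h)$ is a manifold $N$ with an almost complex structure $J$ and a pseudo-Riemannian metric $h$ satisfying $h(Jx,Jy)=-h(x,y)$; $\widetilde{h}(x,y)=h(x,Jy)$; constant sectional curvature $k'$ means its curvature tensor is $R'(x,y,z,w)=k'\{h(y,z)h(x,w)-h(x,z)h(y,w)\}$. The $S^1$-solvable extension is $S^1(N)=\mathbb{R}^+\times N$, $t$ the coordinate on $\mathbb{R}^+=(0,\infty)$, with $\xi=\tfrac{\mathrm{d}}{\mathrm{d}t}$, $\eta=\mathrm{d}t$, $\varphi=J$ on vectors tangent to $N$, $\varphi\xi=0$, and metric $g=\mathrm{d}t^2+\cos2t\,h-\sin2t\,\widetilde{h}$. With $\nabla$ the Levi-Civita connection of $g$, $R(x,y)=\nabla_x\nabla_y-\nabla_y\nabla_x-\nabla_{[x,y]}$, $R(x,y,z,w)=g(R(x,y)z,w)$, and for a basis $\{e_i\}$ with $(g^{ij})$ the inverse of $(g(e_i,e_j))$ (summation convention): $\rho(y,z)=g^{ij}R(e_i,y,z,e_j)$, $\rho^*(y,z)=g^{ij}R(e_i,y,z,\varphi e_j)$, $\tau=g^{ij}\rho(e_i,e_j)$, $\tau^*=g^{ij}\rho^*(e_i,e_j)$,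 $\tau^{**}=g^{ij}\rho^*(e_i,\varphi e_j)$. The sectional curvature of a non-degenerate 2-plane $\alpha$ with orthogonal basis $\{x,y\}$ is $R(x,y,y,x)/(g(x,x)g(y,y))$; $\alpha$ is a $\xi$-section if $\xi\in\alpha$. *)

theory Defs
  imports "HOL-Analysis.Analysis"
begin

text \<open>A metric is a matrix field G x (G x $ i $ j = g(e_i,e_j)); a (1,1)-tensor is a matrix
  field P x with P x *v v the image of v.\<close>

definition pd :: "'n::finite \<Rightarrow> (real^'n \<Rightarrow> real) \<Rightarrow> real^'n \<Rightarrow> real" where
  "pd i f x = frechet_derivative f (at x) (axis i 1)"

fun Ck :: "nat \<Rightarrow> (real^'n::finite) set \<Rightarrow> (real^'n \<Rightarrow> real) \<Rightarrow> bool" where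
  "Ck 0 U f = continuous_on U f"
| "Ck (Suc k) U f = (continuous_on U f \<and> (\<forall>x\<in>U. f differentiable (at x)) \<and> (\<forall>i. Ck k U (pd i f)))"

definition smooth_fun :: "(real^'n::finite) set \<Rightarrow> (real^'n \<Rightarrow> real) \<Rightarrow> bool" where
  "smooth_fun U f = (\<forall>k. Ck k U f)"

definition gv :: "(real^'n \<Rightarrow> real^'n^'n) \<Rightarrow> real^'n \<Rightarrow> real^'n \<Rightarrow> real^'n \<Rightarrow> real"
  where "gv G x X Y = (\<Sum>i\<in>UNIV. \<Sum>j\<in>UNIV. X$i * G x $ i $ j * Y$j)"

definition ginv :: "(real^'n \<Rightarrow> real^'n^'n) \<Rightarrow> real^'n \<Rightarrow> real^'n^'n::finite"
  where "ginv G x = matrix_inv (G x)"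

text \<open>Christoffel symbols of the Levi-Civita connection: \<nabla>_{e_i} e_j = Gam k i j e_k.\<close>
definition Gam :: "(real^'n \<Rightarrow> real^'n^'n) \<Rightarrow> 'n::finite \<Rightarrow> 'n \<Rightarrow> 'n \<Rightarrow> real^'n \<Rightarrow> real" where
  "Gam G k i j x = (1/2) * (\<Sum>l\<in>UNIV. ginv G x $ k $ l *
      (pd i (\<lambda>y. G y $ j $ l) x + pd j (\<lambda>y. G y $ i $ l) x - pd l (\<lambda>y. G y $ i $ j) x))"

text \<open>R(e_i,e_j)e_k = Rup l i j k e_l with R(X,Y) = \<nabla>_X\<nabla>_Y - \<nabla>_Y\<nabla>_X - \<nabla>_[X,Y].\<close>
definition Rup :: "(real^'n \<Rightarrow> real^'n^'n) \<Rightarrow> 'n::finite \<Rightarrow> 'n \<Rightarrow> 'n \<Rightarrow> 'n \<Rightarrow> real^'n \<Rightarrow> real" where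
  "Rup G l i j k x = pd i (Gam G l j k) x - pd j (Gam G l i k) x
     + (\<Sum>m\<in>UNIV. Gam G l i m x * Gam G m j k x - Gam G l j m x * Gam G m i k x)"

text \<open>R(X,Y,Z,W) = g(R(X,Y)Z,W).\<close>
definition R4 :: "(real^'n \<Rightarrow> real^'n^'n) \<Rightarrow> real^'n \<Rightarrow> real^'n \<Rightarrow> real^'n \<Rightarrow> real^'n \<Rightarrow> real^'n::finite \<Rightarrow> real" where
  "R4 G x X Y Z W = (\<Sum>i\<in>UNIV. \<Sum>j\<in>UNIV. \<Sum>k\<in>UNIV. \<Sum>l\<in>UNIV. \<Sum>w\<in>UNIV.
      X$i * Y$j * Z$k * W$w * G x $ l $ w * Rup G l i j k x)"

definition rho :: "(real^'n \<Rightarrow> real^'n^'n) \<Rightarrow> real^'n \<Rightarrow> real^'n \<Rightarrow> real^'n::finite \<Rightarrow> real" where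
  "rho G x Y Z = (\<Sum>i\<in>UNIV. \<Sum>j\<in>UNIV. ginv G x $ i $ j * R4 G x (axis i 1) Y Z (axis j 1))"

definition rhostar :: "(real^'n \<Rightarrow> real^'n^'n) \<Rightarrow> (real^'n \<Rightarrow> real^'n^'n) \<Rightarrow> real^'n \<Rightarrow> real^'n \<Rightarrow> real^'n::finite \<Rightarrow> real" where
  "rhostar G P x Y Z = (\<Sum>i\<in>UNIV. \<Sum>j\<in>UNIV. ginv G x $ i $ j * R4 G x (axis i 1) Y Z (P x *v axis j 1))"

definition tau :: "(real^'n \<Rightarrow> real^'n^'n) \<Rightarrow> real^'n::finite \<Rightarrow> real" where
  "tau G x = (\<Sum>i\<in>UNIV. \<Sum>j\<in>UNIV. ginv G x $ i $ j * rho G x (axis i 1) (axis j 1))"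

definition taustar :: "(real^'n \<Rightarrow> real^'n^'n) \<Rightarrow> (real^'n \<Rightarrow> real^'n^'n) \<Rightarrow> real^'n::finite \<Rightarrow> real" where
  "taustar G P x = (\<Sum>i\<in>UNIV. \<Sum>j\<in>UNIV. ginv G x $ i $ j * rhostar G P x (axis i 1) (axis j 1))"

definition taustarstar :: "(real^'n \<Rightarrow> real^'n^'n) \<Rightarrow> (real^'n \<Rightarrow> real^'n^'n) \<Rightarrow> real^'n::finite \<Rightarrow> real" where
  "taustarstar G P x = (\<Sum>i\<in>UNIV. \<Sum>j\<in>UNIV. ginv G x $ i $ j * rhostar G P x (axis i 1) (P x *v axis j 1))"

definition almost_norden :: "(real^'n::finite) set \<Rightarrow> (real^'n \<Rightarrow> real^'n^'n) \<Rightarrow> (real^'n \<Rightarrow> real^'n^'n) \<Rightarrow> bool" where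
  "almost_norden U J h \<longleftrightarrow> open U \<and>
     (\<forall>i j. smooth_fun U (\<lambda>p. h p $ i $ j) \<and> smooth_fun U (\<lambda>p. J p $ i $ j)) \<and>
     (\<forall>p\<in>U. transpose (h p) = h p \<and> det (h p) \<noteq> 0 \<and>
             J p ** J p = - mat 1 \<and>
             (\<forall>X Y. gv h p (J p *v X) (J p *v Y) = - gv h p X Y))"

definition const_sec_curv :: "(real^'n::finite) set \<Rightarrow> (real^'n \<Rightarrow> real^'n^'n) \<Rightarrow> real \<Rightarrow> bool" where
  "const_sec_curv U h k' \<longleftrightarrow> (\<forall>p\<in>U. \<forall>X Y Z W.
      R4 h p X Y Z W = k' * (gv h p Y Z * gv h p X W - gv h p X Z * gv h p Y W))"

text \<open>The S^1-solvable extension on (0,\<infinity>) \<times> U \<subseteq> real^('n option); coordinate None is t.\<close>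
definition tco :: "real^('n::finite option) \<Rightarrow> real" where "tco x = x $ None"
definition pco :: "real^('n::finite option) \<Rightarrow> real^'n" where "pco x = (\<chi> i. x $ Some i)"

definition ext_dom :: "(real^'n::finite) set \<Rightarrow> (real^('n option)) set" where
  "ext_dom U = {x. 0 < tco x \<and> pco x \<in> U}"

definition htilde :: "(real^'n \<Rightarrow> real^'n^'n) \<Rightarrow> (real^'n \<Rightarrow> real^'n^'n) \<Rightarrow> real^'n \<Rightarrow> real^'n^'n::finite" where
  "htilde J h p = h p ** J p"

definition ext_metric :: "(real^'n \<Rightarrow> real^'n^'n) \<Rightarrow> (real^'n \<Rightarrow> real^'n^'n) \<Rightarrow> real^('n::finite option) \<Rightarrow> real^('n option)^('n option)" where
  "ext_metric J h x = (\<chi> a b. case (a, b) of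
       (None, None) \<Rightarrow> 1
     | (Some i, Some j) \<Rightarrow> cos (2 * tco x) * h (pco x) $ i $ j - sin (2 * tco x) * htilde J h (pco x) $ i $ j
     | _ \<Rightarrow> 0)"

definition ext_phi :: "(real^'n \<Rightarrow> real^'n^'n) \<Rightarrow> real^('n::finite option) \<Rightarrow> real^('n option)^('n option)" where
  "ext_phi J x = (\<chi> a b. case (a, b) of (Some i, Some j) \<Rightarrow> J (pco x) $ i $ j | _ \<Rightarrow> 0)"

definition ext_xi :: "real^('n::finite option)" where "ext_xi = axis None 1"

end

theory Submission
  imports Defs
begin

(* In the coordinates (t, p) of the extension, g = dt^2 + h (cos 2t - sin 2t J), and J^2 = -1 makes
   cos 2t + sin 2t J the inverse of cos 2t - sin 2t J.  The mixed Christoffel symbols are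
   Gamma^d_{a t} = -J^d_a, and J^2 = -1 turns this into R(e_a, xi, xi, e_b) = g(e_a, e_b): in the
   direction of xi the extension is curved like a space of constant curvature 1, and together with
   the symmetries of R this forces every xi-section to have sectional curvature 1.
   When the base is 2-dimensional, the horizontal curvature components are all +-Q for a single
   function Q.  An alternating form on a plane scales by det P under P, and det J = 1, so tau**
   is the horizontal part of tau, which is tau - 4; tau* is a multiple of trace J = 0. *)

section \<open>Partial derivatives\<close>

lemma pd_has_derivative: "(f has_derivative f') (at x) \<Longrightarrow> pd i f x = f' (axis i 1)"
  unfolding pd_def using frechet_derivative_at by metis

lemma pd_transform_within_open:
  assumes "open S" "x \<in> S" "\<And>y. y \<in> S \<Longrightarrow> f y = g y"
  shows "pd i f x = pd i g x"
proof -
  have "\<And>D. (f has_derivative D) (at x) \<longleftrightarrow> (g has_derivative D) (at x)"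
    using has_derivative_transform_within_open[OF _ assms(1,2)] assms(3) by metis
  then show ?thesis unfolding pd_def frechet_derivative_def by simp
qed

lemma differentiable_transform_within_open:
  assumes "open S" "x \<in> S" "\<And>y. y \<in> S \<Longrightarrow> f y = g y" "f differentiable (at x)"
  shows "g differentiable (at x)"
  using has_derivative_transform_within_open[OF _ assms(1,2)] assms(3,4)
  unfolding differentiable_def by metis

lemma pd_const [simp]: "pd i (\<lambda>y. c) = (\<lambda>x. 0)"
  using pd_has_derivative[OF has_derivative_const] by fastforce

lemma pd_add:
  assumes "f differentiable (at x)" "g differentiable (at x)"
  shows "pd i (\<lambda>y. f y + g y) x = pd i f x + pd i g x"
  using pd_has_derivative[OF has_derivative_add[OF assms[unfolded frechet_derivative_works]]]
  by (simp add: pd_def algebra_simps)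

lemma pd_diff:
  assumes "f differentiable (at x)" "g differentiable (at x)"
  shows "pd i (\<lambda>y. f y - g y) x = pd i f x - pd i g x"
  using pd_has_derivative[OF has_derivative_diff[OF assms[unfolded frechet_derivative_works]]]
  by (simp add: pd_def algebra_simps)

lemma pd_mult:
  assumes "f differentiable (at x)" "g differentiable (at x)"
  shows "pd i (\<lambda>y. f y * g y) x = pd i f x * g x + f x * pd i g x"
  using pd_has_derivative[OF has_derivative_mult[OF assms[unfolded frechet_derivative_works]]]
  by (simp add: pd_def algebra_simps)

lemma pd_cmult: "f differentiable (at x) \<Longrightarrow> pd i (\<lambda>y. c * f y) x = c * pd i f x"
  using pd_mult[of "\<lambda>y. c" x f i] by simp

lemma pd_sum:
  "finite A \<Longrightarrow> (\<And>a. a \<in> A \<Longrightarrow> f a differentiable (at x)) \<Longrightarrow>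
   pd i (\<lambda>y. \<Sum>a\<in>A. f a y) x = (\<Sum>a\<in>A. pd i (f a) x)"
proof (induction A rule: finite_induct)
  case (insert a A)
  then have "(\<lambda>y. \<Sum>a\<in>A. f a y) differentiable (at x)"
    by (intro differentiable_sum) auto
  with insert show ?case
    using pd_add[of "f a" x "\<lambda>y. \<Sum>a\<in>A. f a y"] by simp
qed simp

definition twice_differentiable_on :: "(real^'n::finite) set \<Rightarrow> (real^'n \<Rightarrow> real) \<Rightarrow> bool" where
  "twice_differentiable_on U f \<longleftrightarrow>
     (\<forall>p\<in>U. f differentiable (at p)) \<and> (\<forall>k. \<forall>p\<in>U. pd k f differentiable (at p))"

lemma twice_differentiable_onD:
  "twice_differentiable_on U f \<Longrightarrow> p \<in> U \<Longrightarrow> f differentiable (at p)"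
  "twice_differentiable_on U f \<Longrightarrow> p \<in> U \<Longrightarrow> pd k f differentiable (at p)"
  unfolding twice_differentiable_on_def by auto

lemma smooth_fun_imp_twice_differentiable_on: "smooth_fun U f \<Longrightarrow> twice_differentiable_on U f"
  unfolding smooth_fun_def twice_differentiable_on_def
  by (metis Ck.simps(2) One_nat_def)

lemma twice_differentiable_on_const: "twice_differentiable_on U (\<lambda>p. c)"
  unfolding twice_differentiable_on_def by simp

lemma twice_differentiable_on_add:
  assumes U: "open U" and f: "twice_differentiable_on U f" and g: "twice_differentiable_on U g"
  shows "twice_differentiable_on U (\<lambda>p. f p + g p)"
  unfolding twice_differentiable_on_def
proof (intro conjI ballI allI)
  fix p k assume p: "p \<in> U"
  note fg = twice_differentiable_onD[OF f p] twice_differentiable_onD[OF g p]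
  show "(\<lambda>p. f p + g p) differentiable at p" using fg by (intro differentiable_add)
  have "pd k f q + pd k g q = pd k (\<lambda>p. f p + g p) q" if "q \<in> U" for q
    using twice_differentiable_onD[OF f that] twice_differentiable_onD[OF g that] by (simp add: pd_add)
  moreover have "(\<lambda>q. pd k f q + pd k g q) differentiable at p" using fg by (intro differentiable_add)
  ultimately show "pd k (\<lambda>p. f p + g p) differentiable at p"
    by (rule differentiable_transform_within_open[OF U p])
qed

lemma twice_differentiable_on_mult:
  assumes U: "open U" and f: "twice_differentiable_on U f" and g: "twice_differentiable_on U g"
  shows "twice_differentiable_on U (\<lambda>p. f p * g p)"
  unfolding twice_differentiable_on_def
proof (intro conjI ballI allI)
  fix p k assume p: "p \<in> U"
  note fg = twice_differentiable_onD[OF f p] twice_differentiable_onD[OF g p]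
  show "(\<lambda>p. f p * g p) differentiable at p" using fg by (intro differentiable_mult)
  have "pd k f q * g q + f q * pd k g q = pd k (\<lambda>p. f p * g p) q" if "q \<in> U" for q
    using twice_differentiable_onD[OF f that] twice_differentiable_onD[OF g that] by (simp add: pd_mult)
  moreover have "(\<lambda>q. pd k f q * g q + f q * pd k g q) differentiable at p"
    using fg by (intro differentiable_add differentiable_mult)
  ultimately show "pd k (\<lambda>p. f p * g p) differentiable at p"
    by (rule differentiable_transform_within_open[OF U p])
qed

lemma twice_differentiable_on_sum:
  assumes U: "open U" and "finite A" and "\<And>a. a \<in> A \<Longrightarrow> twice_differentiable_on U (f a)"
  shows "twice_differentiable_on U (\<lambda>p. \<Sum>a\<in>A. f a p)"
  using assms(2,3)
  by (induction A rule: finite_induct)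
     (auto intro: twice_differentiable_on_const twice_differentiable_on_add[OF U])

lemma has_derivative_along_line:
  fixes f :: "'a::real_normed_vector \<Rightarrow> real"
  assumes "f differentiable (at (p + s *\<^sub>R v))"
  shows "((\<lambda>s. f (p + s *\<^sub>R v)) has_derivative
           (\<lambda>d. d * frechet_derivative f (at (p + s *\<^sub>R v)) v)) (at s within T)"
proof -
  let ?D = "frechet_derivative f (at (p + s *\<^sub>R v))"
  have "((\<lambda>s. p + s *\<^sub>R v) has_derivative (\<lambda>d. d *\<^sub>R v)) (at s within T)"
    by (auto intro!: derivative_eq_intros)
  moreover have D: "(f has_derivative ?D) (at (p + s *\<^sub>R v))"
    using assms frechet_derivative_works by blast
  ultimately have "((\<lambda>s. f (p + s *\<^sub>R v)) has_derivative (\<lambda>d. ?D (d *\<^sub>R v))) (at s within T)"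
    by (rule has_derivative_compose[where g=f, unfolded o_def])
  moreover have "?D (d *\<^sub>R v) = d * ?D v" for d
    using linear_scale[OF has_derivative_linear[OF D]] by simp
  ultimately show ?thesis by simp
qed

section \<open>Symmetry of mixed second partial derivatives\<close>

lemma second_difference_mvt:
  fixes f :: "real^'m::finite \<Rightarrow> real"
  assumes "0 < h"
    and df: "\<And>a s. a \<in> {0, h} \<Longrightarrow> s \<in> {0..h} \<Longrightarrow>
               f differentiable (at (x + a *\<^sub>R axis j 1 + s *\<^sub>R axis i 1))"
  shows "\<exists>s\<in>{0<..<h}.
           f (x + h *\<^sub>R axis i 1 + h *\<^sub>R axis j 1) - f (x + h *\<^sub>R axis j 1) - f (x + h *\<^sub>R axis i 1) + f x
         = h * (pd i f (x + h *\<^sub>R axis j 1 + s *\<^sub>R axis i 1) - pd i f (x + s *\<^sub>R axis i 1))"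
proof -
  define w where "w s = f (x + h *\<^sub>R axis j 1 + s *\<^sub>R axis i 1) - f (x + 0 *\<^sub>R axis j 1 + s *\<^sub>R axis i 1)" for s
  have wd: "(w has_derivative (\<lambda>d. d * (pd i f (x + h *\<^sub>R axis j 1 + s *\<^sub>R axis i 1)
                                    - pd i f (x + 0 *\<^sub>R axis j 1 + s *\<^sub>R axis i 1)))) (at s within {0..h})"
    if "0 \<le> s" "s \<le> h" for s
    unfolding w_def[abs_def] pd_def right_diff_distrib
    using that by (intro has_derivative_diff has_derivative_along_line df) simp_all
  obtain s where "s \<in> {0<..<h}"
    "w h - w 0 = h * (pd i f (x + h *\<^sub>R axis j 1 + s *\<^sub>R axis i 1)
                    - pd i f (x + 0 *\<^sub>R axis j 1 + s *\<^sub>R axis i 1))"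
    using mvt_simple[of 0 h w, OF \<open>0 < h\<close> wd] by (auto simp: mult.commute)
  then show ?thesis unfolding w_def by (auto simp: algebra_simps)
qed

lemma dist_square_corner:
  fixes x :: "real^'m::finite"
  assumes "a \<in> {0, h}" "s \<in> {0..h}"
  shows "dist x (x + a *\<^sub>R axis j 1 + s *\<^sub>R axis i 1) \<le> 2 * h"
proof -
  have "dist x (x + a *\<^sub>R axis j 1 + s *\<^sub>R axis i 1) = norm (a *\<^sub>R axis j 1 + s *\<^sub>R axis i 1 :: real^'m)"
    by (metis add.assoc add.right_neutral dist_add_cancel dist_0_norm)
  moreover have "norm (a *\<^sub>R axis j 1 + s *\<^sub>R axis i 1 :: real^'m) \<le> \<bar>a\<bar> + \<bar>s\<bar>"
    by (rule order_trans[OF norm_triangle_ineq]) simp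
  moreover have "\<bar>a\<bar> \<le> h" "\<bar>s\<bar> \<le> h" using assms by auto
  ultimately show ?thesis by linarith
qed

lemma linear_approx_difference:
  fixes g :: "'a::real_normed_vector \<Rightarrow> real"
  assumes "linear F" "\<bar>g y1 - g x - F (y1 - x)\<bar> \<le> \<delta>" "\<bar>g y2 - g x - F (y2 - x)\<bar> \<le> \<delta>"
  shows "\<bar>(g y1 - g y2) - F (y1 - y2)\<bar> \<le> 2 * \<delta>"
proof -
  have "F (y1 - y2) = F (y1 - x) - F (y2 - x)" using linear_diff[OF assms(1)] by (metis diff_diff_eq2 diff_add_cancel)
  then show ?thesis using assms(2,3) by (simp add: abs_le_iff)
qed

lemma second_difference_bound:
  fixes f :: "real^'m::finite \<Rightarrow> real"
  assumes h: "0 < h" and linF: "linear F"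
    and df: "\<And>a s. a \<in> {0, h} \<Longrightarrow> s \<in> {0..h} \<Longrightarrow>
               f differentiable (at (x + a *\<^sub>R axis j 1 + s *\<^sub>R axis i 1))"
    and approx: "\<And>y. dist x y \<le> 2 * h \<Longrightarrow> \<bar>pd i f y - pd i f x - F (y - x)\<bar> \<le> e/2 * h"
  shows "\<bar>(f (x + h *\<^sub>R axis i 1 + h *\<^sub>R axis j 1) - f (x + h *\<^sub>R axis j 1) - f (x + h *\<^sub>R axis i 1) + f x)
           - h^2 * F (axis j 1)\<bar> \<le> e * h^2"
proof -
  obtain s where s: "s \<in> {0<..<h}"
    and mvt: "f (x + h *\<^sub>R axis i 1 + h *\<^sub>R axis j 1) - f (x + h *\<^sub>R axis j 1) - f (x + h *\<^sub>R axis i 1) + f x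
            = h * (pd i f (x + h *\<^sub>R axis j 1 + s *\<^sub>R axis i 1) - pd i f (x + s *\<^sub>R axis i 1))"
    using second_difference_mvt[OF h df] by blast
  have near: "dist x (x + h *\<^sub>R axis j 1 + s *\<^sub>R axis i 1) \<le> 2 * h" "dist x (x + s *\<^sub>R axis i 1) \<le> 2 * h"
    using dist_square_corner[of h h s x j i] dist_square_corner[of 0 h s x j i] s by auto
  have "\<bar>(pd i f (x + h *\<^sub>R axis j 1 + s *\<^sub>R axis i 1) - pd i f (x + s *\<^sub>R axis i 1)) - h * F (axis j 1)\<bar>
          \<le> 2 * (e/2 * h)"
    using linear_approx_difference[OF linF approx[OF near(1)] approx[OF near(2)]] linear_scale[OF linF] by simp
  then have "h * \<bar>(pd i f (x + h *\<^sub>R axis j 1 + s *\<^sub>R axis i 1) - pd i f (x + s *\<^sub>R axis i 1)) - h * F (axis j 1)\<bar>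
          \<le> e * h^2"
    using h mult_left_mono[of _ "2 * (e/2 * h)" h] by (simp add: power2_eq_square mult.assoc)
  moreover have "h * (pd i f (x + h *\<^sub>R axis j 1 + s *\<^sub>R axis i 1) - pd i f (x + s *\<^sub>R axis i 1)) - h^2 * F (axis j 1)
      = h * ((pd i f (x + h *\<^sub>R axis j 1 + s *\<^sub>R axis i 1) - pd i f (x + s *\<^sub>R axis i 1)) - h * F (axis j 1))"
    by (simp add: power2_eq_square algebra_simps)
  ultimately show ?thesis unfolding mvt using h by (simp add: abs_mult)
qed

lemma second_difference_approx:
  fixes f :: "real^'m::finite \<Rightarrow> real"
  assumes S: "open S" "x \<in> S" and df: "\<forall>y\<in>S. f differentiable (at y)"
    and di: "pd i f differentiable (at x)" and e: "0 < e"
  shows "\<exists>d>0. \<forall>h. 0 < h \<and> h < d \<longrightarrow>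
     \<bar>(f (x + h *\<^sub>R axis i 1 + h *\<^sub>R axis j 1) - f (x + h *\<^sub>R axis j 1) - f (x + h *\<^sub>R axis i 1) + f x)
       - h^2 * pd j (pd i f) x\<bar> \<le> e * h^2"
proof -
  obtain r where r: "r > 0" "ball x r \<subseteq> S" using S openE by metis
  define F where "F = frechet_derivative (pd i f) (at x)"
  have hasF: "(pd i f has_derivative F) (at x)" using di frechet_derivative_works F_def by blast
  obtain d where d: "d > 0" "\<forall>y. norm (y - x) < d \<longrightarrow>
      norm (pd i f y - pd i f x - F (y - x)) \<le> (e/4) * norm (y - x)"
    using hasF[unfolded has_derivative_at_alt] e by (meson divide_pos_pos zero_less_numeral)
  show ?thesis
  proof (intro exI[of _ "min d r / 3"] conjI allI impI)
    show "0 < min d r / 3" using d r by simp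
    fix h :: real assume h: "0 < h \<and> h < min d r / 3"
    have "f differentiable (at (x + a *\<^sub>R axis j 1 + s *\<^sub>R axis i 1))" if "a \<in> {0, h}" "s \<in> {0..h}" for a s
    proof -
      have "x + a *\<^sub>R axis j 1 + s *\<^sub>R axis i 1 \<in> ball x r" using dist_square_corner[OF that, of x j i] h by simp
      then show ?thesis using df r by blast
    qed
    moreover have "\<bar>pd i f y - pd i f x - F (y - x)\<bar> \<le> e/2 * h" if "dist x y \<le> 2 * h" for y
    proof -
      have n: "norm (y - x) \<le> 2*h" using that by (metis dist_commute dist_norm)
      then have "\<bar>pd i f y - pd i f x - F (y - x)\<bar> \<le> (e/4) * norm (y - x)" using d h by auto
      also have "\<dots> \<le> e/2 * h" using n e by simp
      finally show ?thesis .
    qed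
    ultimately show "\<bar>(f (x + h *\<^sub>R axis i 1 + h *\<^sub>R axis j 1) - f (x + h *\<^sub>R axis j 1) - f (x + h *\<^sub>R axis i 1) + f x)
       - h^2 * pd j (pd i f) x\<bar> \<le> e * h^2"
      using second_difference_bound[of h F f x j i e] has_derivative_linear[OF hasF] h
      unfolding pd_def F_def by simp
  qed
qed

text \<open>Both mixed partials are limits of the same symmetric second difference quotient.\<close>

lemma pd_commute:
  fixes f :: "real^'m::finite \<Rightarrow> real"
  assumes S: "open S" "x \<in> S" and df: "\<forall>y\<in>S. f differentiable (at y)"
    and di: "pd i f differentiable (at x)" and dj: "pd j f differentiable (at x)"
  shows "pd j (pd i f) x = pd i (pd j f) x"
proof (rule ccontr)
  define A where "A = pd j (pd i f) x"
  define B where "B = pd i (pd j f) x"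
  assume "pd j (pd i f) x \<noteq> pd i (pd j f) x"
  then have pos: "\<bar>A - B\<bar> / 4 > 0" unfolding A_def B_def by simp
  define Q where "Q h = f (x + h *\<^sub>R axis i 1 + h *\<^sub>R axis j 1) - f (x + h *\<^sub>R axis j 1)
                        - f (x + h *\<^sub>R axis i 1) + f x" for h
  obtain d1 where d1: "d1 > 0" "\<forall>h. 0 < h \<and> h < d1 \<longrightarrow> \<bar>Q h - h^2 * A\<bar> \<le> (\<bar>A - B\<bar> / 4) * h^2"
    using second_difference_approx[OF S df di pos, of j] unfolding A_def Q_def by blast
  have Q_swap: "f (x + h *\<^sub>R axis j 1 + h *\<^sub>R axis i 1) - f (x + h *\<^sub>R axis i 1)
                 - f (x + h *\<^sub>R axis j 1) + f x = Q h" for h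
    unfolding Q_def by (simp add: algebra_simps)
  obtain d2 where d2: "d2 > 0" "\<forall>h. 0 < h \<and> h < d2 \<longrightarrow> \<bar>Q h - h^2 * B\<bar> \<le> (\<bar>A - B\<bar> / 4) * h^2"
    using second_difference_approx[OF S df dj pos, of i] unfolding B_def Q_swap by blast
  define h where "h = min d1 d2 / 2"
  have h: "0 < h" "h < d1" "h < d2" using d1 d2 unfolding h_def by auto
  have q1: "\<bar>Q h - h^2 * A\<bar> \<le> (\<bar>A - B\<bar> / 4) * h^2" using d1 h by blast
  have q2: "\<bar>Q h - h^2 * B\<bar> \<le> (\<bar>A - B\<bar> / 4) * h^2" using d2 h by blast
  have "h^2 * \<bar>A - B\<bar> = \<bar>h^2 * (A - B)\<bar>" by (simp add: abs_mult)
  also have "\<dots> = \<bar>(Q h - h^2 * B) - (Q h - h^2 * A)\<bar>" by (simp add: algebra_simps)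
  also have "\<dots> \<le> (\<bar>A - B\<bar> / 4) * h^2 + (\<bar>A - B\<bar> / 4) * h^2"
    using q1 q2 abs_triangle_ineq4[of "Q h - h^2 * B" "Q h - h^2 * A"] by linarith
  also have "\<dots> = h^2 * (\<bar>A - B\<bar> / 2)" by simp
  finally have "h^2 * \<bar>A - B\<bar> \<le> h^2 * (\<bar>A - B\<bar> / 2)" .
  then show False using h pos by (simp add: mult_le_cancel_left)
qed

lemma sum_axis_left [simp]: "(\<Sum>k\<in>UNIV. (axis i 1 :: real^'n::finite) $ k * f k) = f i"
proof -
  have "(\<Sum>k\<in>UNIV. (axis i 1 :: real^'n) $ k * f k) = (\<Sum>k\<in>UNIV. if k = i then f k else 0)"
    by (intro sum.cong) (auto simp: axis_def)
  then show ?thesis by (simp add: sum.delta)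
qed

lemma sum_axis_right [simp]: "(\<Sum>k\<in>UNIV. f k * (axis i 1 :: real^'n::finite) $ k) = f i"
  using sum_axis_left[of i f] by (simp add: mult.commute)

lemma sum_delta_left [simp]: "(\<Sum>m\<in>UNIV. (if w = m then 1 else 0) * (f m :: real)) = f (w::'a::finite)"
proof -
  have "(\<Sum>m\<in>UNIV. (if w = m then 1 else 0) * f m) = (\<Sum>m\<in>UNIV. if w = m then f m else 0)"
    by (intro sum.cong) auto
  then show ?thesis by simp
qed

lemma matrix_mult_nth: "(A ** B) $ i $ j = (\<Sum>k\<in>UNIV. A $ i $ k * B $ k $ j)"
  by (simp add: matrix_matrix_mult_def)

lemma matrix_vector_mult_nth: "(A *v v) $ i = (\<Sum>k\<in>UNIV. A $ i $ k * v $ k)"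
  by (simp add: matrix_vector_mult_def)

lemma matrix_diff_ldistrib: "(A::real^'n::finite^'m) ** (B - C) = A ** B - A ** C"
  by (simp add: matrix_mult_nth vec_eq_iff sum_subtractf algebra_simps)

lemma matrix_diff_rdistrib: "((A::real^'n::finite^'m) - B) ** C = A ** C - B ** C"
  by (simp add: matrix_mult_nth vec_eq_iff sum_subtractf algebra_simps)

lemma matrix_add_rdistrib: "((A::real^'n::finite^'m) + B) ** C = A ** C + B ** C"
  by (simp add: matrix_mult_nth vec_eq_iff sum.distrib algebra_simps)

lemma invertible_matrix_inv:
  "invertible (A::real^'n::finite^'n) \<Longrightarrow> A ** matrix_inv A = mat 1 \<and> matrix_inv A ** A = mat 1"
  unfolding invertible_def matrix_inv_def by (rule someI_ex)

lemma matrix_inv_unique: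
  fixes A B :: "real^'n::finite^'n"
  assumes "A ** B = mat 1"
  shows "matrix_inv A = B"
proof -
  have "B ** A = mat 1" using assms matrix_left_right_inverse by blast
  then have "\<exists>A'. A ** A' = mat 1 \<and> A' ** A = mat 1" using assms by blast
  then have inv: "A ** matrix_inv A = mat 1 \<and> matrix_inv A ** A = mat 1"
    unfolding matrix_inv_def by (rule someI_ex)
  have "matrix_inv A = matrix_inv A ** (A ** B)" using assms by simp
  also have "\<dots> = B" using inv by (simp add: matrix_mul_assoc)
  finally show ?thesis .
qed

lemma transpose_right_inverse:
  fixes A B :: "real^'n::finite^'n"
  assumes "A ** B = mat 1" "transpose A = A"
  shows "transpose B = B"
proof -
  have BA: "transpose B ** A = mat 1"
    using arg_cong[OF assms(1), of transpose] assms(2) by (simp add: matrix_transpose_mul)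
  have "transpose B = transpose B ** (A ** B)" using assms by simp
  also have "\<dots> = B" using BA by (simp add: matrix_mul_assoc)
  finally show ?thesis .
qed

lemma cos_sin_J_inverse:
  fixes J :: "real^'n::finite^'n"
  assumes "J ** J = - mat 1" "c * c + s * s = 1"
  shows "(c *\<^sub>R mat 1 - s *\<^sub>R J) ** (c *\<^sub>R mat 1 + s *\<^sub>R J) = mat 1"
proof -
  have "(c *\<^sub>R mat 1 - s *\<^sub>R J) ** (c *\<^sub>R mat 1 + s *\<^sub>R J) = (c * c) *\<^sub>R mat 1 - (s * s) *\<^sub>R (J ** J)"
    by (simp add: matrix_diff_rdistrib matrix_add_ldistrib matrix_scalar_ac scalar_matrix_assoc[symmetric] scaleR_diff_right algebra_simps)
  also have "\<dots> = (c * c + s * s) *\<^sub>R mat 1" using assms(1) by (simp add: scaleR_add_left)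
  finally show ?thesis using assms(2) by simp
qed

section \<open>Curvature of a coordinate metric\<close>

lemma gv_axis_left: "gv G x (axis i 1) Y = (\<Sum>j\<in>UNIV. G x $ i $ j * Y $ j)"
  unfolding gv_def by (simp add: mult.assoc sum_distrib_left[symmetric])

lemma gv_axis_right: "gv G x X (axis j 1) = (\<Sum>i\<in>UNIV. X $ i * G x $ i $ j)"
  unfolding gv_def by simp

lemma gv_linear_left: "gv G x (\<alpha> *\<^sub>R X + \<beta> *\<^sub>R X') Y = \<alpha> * gv G x X Y + \<beta> * gv G x X' Y"
  unfolding gv_def by (simp add: algebra_simps sum.distrib sum_distrib_left)

definition Rlow :: "(real^'n \<Rightarrow> real^'n^'n) \<Rightarrow> real^'n \<Rightarrow> 'n::finite \<Rightarrow> 'n \<Rightarrow> 'n \<Rightarrow> 'n \<Rightarrow> real" where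
  "Rlow G x i j k w = (\<Sum>l\<in>UNIV. G x $ l $ w * Rup G l i j k x)"

lemma R4_eq_Rlow: "R4 G x X Y Z W = (\<Sum>i\<in>UNIV. \<Sum>j\<in>UNIV. \<Sum>k\<in>UNIV. \<Sum>w\<in>UNIV.
    X$i * Y$j * Z$k * W$w * Rlow G x i j k w)"
proof -
  have "(\<Sum>l\<in>UNIV. \<Sum>w\<in>UNIV. X$i * Y$j * Z$k * W$w * G x $ l $ w * Rup G l i j k x)
      = (\<Sum>w\<in>UNIV. X$i * Y$j * Z$k * W$w * Rlow G x i j k w)" for i j k
    unfolding Rlow_def by (subst sum.swap) (simp add: sum_distrib_left mult.assoc)
  then show ?thesis unfolding R4_def by simp
qed

lemma R4_axis_axis: "R4 G x (axis i 1) (axis j 1) Z W = (\<Sum>k\<in>UNIV. \<Sum>w\<in>UNIV. Z$k * W$w * Rlow G x i j k w)"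
  unfolding R4_eq_Rlow by (simp add: sum_distrib_left[symmetric] mult.assoc)

lemma R4_axis_axis_axis: "R4 G x (axis i 1) (axis j 1) (axis k 1) W = (\<Sum>w\<in>UNIV. W$w * Rlow G x i j k w)"
  unfolding R4_axis_axis by (simp add: sum_distrib_left[symmetric] mult.assoc)

lemma R4_axis4: "R4 G x (axis i 1) (axis j 1) (axis k 1) (axis w 1) = Rlow G x i j k w"
  unfolding R4_axis_axis_axis by simp

lemma R4_axis_first_last: "R4 G x (axis i 1) Y Z (axis w 1) = (\<Sum>j\<in>UNIV. \<Sum>k\<in>UNIV. Y$j * Z$k * Rlow G x i j k w)"
  unfolding R4_eq_Rlow
  by (simp add: sum_distrib_left[symmetric] sum_distrib_right[symmetric] mult.assoc mult.left_commute[of "axis w 1 $ _"])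

lemma R4_zero_third [simp]: "R4 G x X Y 0 W = 0"
  unfolding R4_eq_Rlow by simp

lemma R4_linear_first: "R4 G x (\<alpha> *\<^sub>R X + \<beta> *\<^sub>R X') Y Z W = \<alpha> * R4 G x X Y Z W + \<beta> * R4 G x X' Y Z W"
  unfolding R4_eq_Rlow by (simp add: algebra_simps sum.distrib sum_distrib_left)

lemma R4_linear_last: "R4 G x X Y Z (\<alpha> *\<^sub>R W + \<beta> *\<^sub>R W') = \<alpha> * R4 G x X Y Z W + \<beta> * R4 G x X Y Z W'"
  unfolding R4_eq_Rlow by (simp add: algebra_simps sum.distrib sum_distrib_left)

lemma Rlow_antisym_first: "Rlow G x i j k w = - Rlow G x j i k w"
  unfolding Rlow_def Rup_def by (simp add: sum_negf[symmetric] sum_subtractf algebra_simps)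

lemma R4_antisym_first: "R4 G x X Y Z W = - R4 G x Y X Z W"
proof -
  have "R4 G x Y X Z W = (\<Sum>i\<in>UNIV. \<Sum>j\<in>UNIV. \<Sum>k\<in>UNIV. \<Sum>w\<in>UNIV.
      Y$j * X$i * Z$k * W$w * Rlow G x j i k w)"
    unfolding R4_eq_Rlow by (rule sum.swap)
  also have "\<dots> = - R4 G x X Y Z W"
    unfolding R4_eq_Rlow sum_negf[symmetric]
    by (intro sum.cong refl) (subst Rlow_antisym_first, simp)
  finally show ?thesis by simp
qed

lemma R4_antisym_lastI:
  assumes "\<And>i j k w. Rlow G x i j k w = - Rlow G x i j w k"
  shows "R4 G x X Y Z W = - R4 G x X Y W Z"
proof -
  have "R4 G x X Y W Z = (\<Sum>i\<in>UNIV. \<Sum>j\<in>UNIV. \<Sum>k\<in>UNIV. \<Sum>w\<in>UNIV.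
      X$i * Y$j * W$w * Z$k * Rlow G x i j w k)"
    unfolding R4_eq_Rlow by (rule sum.cong[OF refl], rule sum.cong[OF refl], rule sum.swap)
  also have "\<dots> = - R4 G x X Y Z W"
    unfolding R4_eq_Rlow sum_negf[symmetric]
    by (intro sum.cong refl) (subst assms, simp add: algebra_simps)
  finally show ?thesis by simp
qed

lemma sectional_curvature_xi_section:
  assumes gv_sym: "\<And>V W. gv G x V W = gv G x W V"
    and antisym: "\<And>X Y Z W. R4 G x X Y Z W = - R4 G x X Y W Z"
    and unit: "gv G x \<xi> \<xi> = 1"
    and R_\<xi>: "\<And>V. R4 G x \<xi> V V \<xi> = gv G x V V - (gv G x \<xi> V)^2"
    and orth: "gv G x X Y = 0" and nz: "gv G x X X * gv G x Y Y \<noteq> 0"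
    and \<xi>: "\<xi> = \<alpha> *\<^sub>R X + \<beta> *\<^sub>R Y"
  shows "R4 G x X Y Y X / (gv G x X X * gv G x Y Y) = 1"
proof -
  let ?R = "R4 G x" and ?g = "gv G x"
  have R_diag: "?R P1 P2 P3 P3 = 0" "?R P1 P1 P2 P3 = 0" for P1 P2 P3
    using antisym[of P1 P2 P3 P3] R4_antisym_first[of G x P1 P1 P2 P3] by simp_all
  have R_swap: "?R Y X X Y = ?R X Y Y X"
    using R4_antisym_first[of G x Y X X Y] antisym[of X Y X Y] by simp
  have gX: "?g \<xi> X = \<alpha> * ?g X X" and gY: "?g \<xi> Y = \<beta> * ?g Y Y"
    unfolding \<xi> gv_linear_left using orth gv_sym[of Y X] by simp_all
  have R1: "\<alpha>^2 * ?R X Y Y X = ?g Y Y - (\<beta> * ?g Y Y)^2"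
    using R_\<xi>[of Y] gY unfolding \<xi> R4_linear_first R4_linear_last
    by (simp add: R_diag power2_eq_square)
  have R2: "\<beta>^2 * ?R X Y Y X = ?g X X - (\<alpha> * ?g X X)^2"
    using R_\<xi>[of X] gX R_swap unfolding \<xi> R4_linear_first R4_linear_last
    by (simp add: R_diag power2_eq_square)
  have one: "\<alpha>^2 * ?g X X + \<beta>^2 * ?g Y Y = 1"
    using unit gX gY gv_sym[of X \<xi>] gv_sym[of Y \<xi>] unfolding \<xi> gv_linear_left
    by (simp add: power2_eq_square algebra_simps)
  have "\<alpha>^2 * (?R X Y Y X - ?g X X * ?g Y Y) = 0" using R1 one by algebra
  moreover have "\<beta>^2 * (?R X Y Y X - ?g X X * ?g Y Y) = 0" using R2 one by algebra
  moreover have "\<alpha> \<noteq> 0 \<or> \<beta> \<noteq> 0" using one by auto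
  ultimately have "?R X Y Y X = ?g X X * ?g Y Y" by auto
  then show ?thesis using nz by simp
qed

text \<open>Twice the Christoffel symbol of the first kind.\<close>

definition Gam1 :: "(real^'n \<Rightarrow> real^'n^'n) \<Rightarrow> 'n::finite \<Rightarrow> 'n \<Rightarrow> 'n \<Rightarrow> real^'n \<Rightarrow> real" where
  "Gam1 G l a b y = pd a (\<lambda>z. G z $ b $ l) y + pd b (\<lambda>z. G z $ a $ l) y - pd l (\<lambda>z. G z $ a $ b) y"

lemma Gam_eq_Gam1: "Gam G l a b y = 1/2 * (\<Sum>m\<in>UNIV. ginv G y $ l $ m * Gam1 G m a b y)"
  unfolding Gam_def Gam1_def ..

lemma sum_mult_Gam:
  "(\<Sum>l\<in>UNIV. c l * Gam G l a b y) = 1/2 * (\<Sum>m\<in>UNIV. (\<Sum>l\<in>UNIV. c l * ginv G y $ l $ m) * Gam1 G m a b y)"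
proof -
  have "(\<Sum>l\<in>UNIV. c l * Gam G l a b y) = (\<Sum>l\<in>UNIV. \<Sum>m\<in>UNIV. 1/2 * (c l * ginv G y $ l $ m * Gam1 G m a b y))"
    unfolding Gam_eq_Gam1 by (simp add: sum_distrib_left algebra_simps)
  also have "\<dots> = (\<Sum>m\<in>UNIV. \<Sum>l\<in>UNIV. 1/2 * (c l * ginv G y $ l $ m * Gam1 G m a b y))"
    by (rule sum.swap)
  finally show ?thesis by (simp add: sum_distrib_left sum_distrib_right mult.assoc)
qed

locale metric_chart =
  fixes S :: "(real^'m::finite) set" and G :: "real^'m \<Rightarrow> real^'m^'m"
  assumes open_chart: "open S"
    and metric_symmetric: "\<And>y i j. y \<in> S \<Longrightarrow> G y $ i $ j = G y $ j $ i"
    and metric_ginv: "\<And>y. y \<in> S \<Longrightarrow> G y ** ginv G y = mat 1"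
    and metric_differentiable: "\<And>y i j. y \<in> S \<Longrightarrow> (\<lambda>z. G z $ i $ j) differentiable (at y)"
    and metric_pd_differentiable: "\<And>y i j k. y \<in> S \<Longrightarrow> pd k (\<lambda>z. G z $ i $ j) differentiable (at y)"
    and ginv_differentiable: "\<And>y i j. y \<in> S \<Longrightarrow> (\<lambda>z. ginv G z $ i $ j) differentiable (at y)"
begin

lemma ginv_right_nth:
  "y \<in> S \<Longrightarrow> (\<Sum>l\<in>UNIV. G y $ w $ l * ginv G y $ l $ m) = (if w = m then 1 else 0)"
  using metric_ginv[of y] by (simp add: matrix_mult_nth[symmetric] mat_def)

lemma ginv_symmetric: "y \<in> S \<Longrightarrow> ginv G y $ i $ j = ginv G y $ j $ i"
proof -
  assume y: "y \<in> S"
  have "transpose (G y) = G y" using metric_symmetric[OF y] by (simp add: transpose_def vec_eq_iff)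
  then have "transpose (ginv G y) = ginv G y" using transpose_right_inverse metric_ginv[OF y] by blast
  then show ?thesis by (metis transpose_def vec_lambda_beta)
qed

lemma pd_metric_symmetric: "y \<in> S \<Longrightarrow> pd k (\<lambda>z. G z $ i $ j) y = pd k (\<lambda>z. G z $ j $ i) y"
  using metric_symmetric by (intro pd_transform_within_open[OF open_chart]) auto

lemma pd2_metric_commute:
  "y \<in> S \<Longrightarrow> pd a (pd b (\<lambda>z. G z $ i $ j)) y = pd b (pd a (\<lambda>z. G z $ i $ j)) y"
  by (rule pd_commute[OF open_chart]) (auto intro: metric_differentiable metric_pd_differentiable)

lemma Gam1_differentiable: "y \<in> S \<Longrightarrow> Gam1 G m a b differentiable (at y)"
  unfolding Gam1_def[abs_def]
  by (intro differentiable_add differentiable_diff metric_pd_differentiable)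

lemma pd_Gam1:
  assumes "y \<in> S"
  shows "pd i (Gam1 G m a b) y = pd i (pd a (\<lambda>z. G z $ b $ m)) y + pd i (pd b (\<lambda>z. G z $ a $ m)) y
                                - pd i (pd m (\<lambda>z. G z $ a $ b)) y"
  unfolding Gam1_def[abs_def] using metric_pd_differentiable[OF assms]
  by (simp add: pd_add pd_diff differentiable_add)

lemma pd_Gam:
  assumes "y \<in> S"
  shows "pd i (Gam G l a b) y = 1/2 * (\<Sum>m\<in>UNIV. pd i (\<lambda>z. ginv G z $ l $ m) y * Gam1 G m a b y
                                                + ginv G y $ l $ m * pd i (Gam1 G m a b) y)"
proof -
  have d: "(\<lambda>z. ginv G z $ l $ m * Gam1 G m a b z) differentiable (at y)" for m
    using ginv_differentiable[OF assms] Gam1_differentiable[OF assms] by (intro differentiable_mult)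
  have "Gam G l a b = (\<lambda>z. 1/2 * (\<Sum>m\<in>UNIV. ginv G z $ l $ m * Gam1 G m a b z))"
    using Gam_eq_Gam1 by blast
  moreover have "(\<lambda>z. \<Sum>m\<in>UNIV. ginv G z $ l $ m * Gam1 G m a b z) differentiable (at y)"
    using d by (intro differentiable_sum) auto
  ultimately have "pd i (Gam G l a b) y = 1/2 * pd i (\<lambda>z. \<Sum>m\<in>UNIV. ginv G z $ l $ m * Gam1 G m a b z) y"
    by (simp only: pd_cmult)
  also have "\<dots> = 1/2 * (\<Sum>m\<in>UNIV. pd i (\<lambda>z. ginv G z $ l $ m * Gam1 G m a b z) y)"
    using d by (simp add: pd_sum)
  finally show ?thesis
    using ginv_differentiable[OF assms] Gam1_differentiable[OF assms] by (simp add: pd_mult)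
qed

lemma pd_ginv:
  assumes "y \<in> S"
  shows "(\<Sum>l\<in>UNIV. G y $ w $ l * pd i (\<lambda>z. ginv G z $ l $ m) y)
       = - (\<Sum>l\<in>UNIV. pd i (\<lambda>z. G z $ w $ l) y * ginv G y $ l $ m)"
proof -
  have "pd i (\<lambda>z. \<Sum>l\<in>UNIV. G z $ w $ l * ginv G z $ l $ m) y = pd i (\<lambda>z. if w = m then 1 else 0) y"
    using ginv_right_nth by (intro pd_transform_within_open[OF open_chart assms]) auto
  moreover have "pd i (\<lambda>z. \<Sum>l\<in>UNIV. G z $ w $ l * ginv G z $ l $ m) y
      = (\<Sum>l\<in>UNIV. pd i (\<lambda>z. G z $ w $ l) y * ginv G y $ l $ m + G y $ w $ l * pd i (\<lambda>z. ginv G z $ l $ m) y)"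
    using metric_differentiable[OF assms] ginv_differentiable[OF assms]
    by (simp add: pd_sum pd_mult differentiable_mult)
  ultimately show ?thesis by (simp add: sum.distrib eq_neg_iff_add_eq_0 add.commute)
qed

lemma lower_Gam:
  assumes "y \<in> S"
  shows "(\<Sum>l\<in>UNIV. G y $ l $ w * Gam G l i m y) = 1/2 * Gam1 G w i m y"
proof -
  have "(\<Sum>l\<in>UNIV. G y $ l $ w * ginv G y $ l $ p) = (if w = p then 1 else 0)" for p
    using ginv_right_nth[OF assms] by (simp add: metric_symmetric[OF assms, of _ w])
  then show ?thesis unfolding sum_mult_Gam by (simp only: sum_delta_left)
qed

lemma pd_metric_eq_Gam1:
  "y \<in> S \<Longrightarrow> pd i (\<lambda>z. G z $ w $ l) y = 1/2 * (Gam1 G w i l y + Gam1 G l i w y)"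
  unfolding Gam1_def using pd_metric_symmetric[of y] by simp

lemma lower_pd_Gam:
  assumes "y \<in> S"
  shows "(\<Sum>l\<in>UNIV. G y $ l $ w * pd i (Gam G l j k) y)
       = - (\<Sum>l\<in>UNIV. pd i (\<lambda>z. G z $ w $ l) y * Gam G l j k y) + 1/2 * pd i (Gam1 G w j k) y"
proof -
  have "(\<Sum>l\<in>UNIV. G y $ l $ w * pd i (Gam G l j k) y)
      = (\<Sum>l\<in>UNIV. \<Sum>m\<in>UNIV. 1/2 * (G y $ w $ l * pd i (\<lambda>z. ginv G z $ l $ m) y * Gam1 G m j k y)
                         + 1/2 * (G y $ w $ l * ginv G y $ l $ m * pd i (Gam1 G m j k) y))"
    unfolding pd_Gam[OF assms] using metric_symmetric[OF assms]
    by (simp add: sum_distrib_left algebra_simps)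
  also have "\<dots> = (\<Sum>m\<in>UNIV. 1/2 * ((\<Sum>l\<in>UNIV. G y $ w $ l * pd i (\<lambda>z. ginv G z $ l $ m) y) * Gam1 G m j k y)
                         + 1/2 * ((\<Sum>l\<in>UNIV. G y $ w $ l * ginv G y $ l $ m) * pd i (Gam1 G m j k) y))"
    by (subst sum.swap) (simp add: sum.distrib sum_distrib_left sum_distrib_right)
  also have "\<dots> = (\<Sum>m\<in>UNIV. - (1/2 * ((\<Sum>l\<in>UNIV. pd i (\<lambda>z. G z $ w $ l) y * ginv G y $ l $ m) * Gam1 G m j k y)))
                  + (\<Sum>m\<in>UNIV. 1/2 * ((if w = m then 1 else 0) * pd i (Gam1 G m j k) y))"
    unfolding pd_ginv[OF assms] ginv_right_nth[OF assms]
    by (simp only: sum.distrib mult_minus_left mult_minus_right)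
  also have "\<dots> = - (1/2 * (\<Sum>m\<in>UNIV. (\<Sum>l\<in>UNIV. pd i (\<lambda>z. G z $ w $ l) y * ginv G y $ l $ m) * Gam1 G m j k y))
                  + 1/2 * pd i (Gam1 G w j k) y"
    by (simp only: sum_negf sum_distrib_left[symmetric] sum_delta_left)
  finally show ?thesis unfolding sum_mult_Gam .
qed

lemma lower_Gam_Gam:
  assumes "y \<in> S"
  shows "(\<Sum>l\<in>UNIV. G y $ l $ w * (\<Sum>m\<in>UNIV. Gam G l i m y * Gam G m j k y))
       = 1/2 * (\<Sum>m\<in>UNIV. Gam1 G w i m y * Gam G m j k y)"
proof -
  have "(\<Sum>l\<in>UNIV. G y $ l $ w * (\<Sum>m\<in>UNIV. Gam G l i m y * Gam G m j k y))
      = (\<Sum>m\<in>UNIV. (\<Sum>l\<in>UNIV. G y $ l $ w * Gam G l i m y) * Gam G m j k y)"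
  proof -
    have "(\<Sum>l\<in>UNIV. G y $ l $ w * (\<Sum>m\<in>UNIV. Gam G l i m y * Gam G m j k y))
        = (\<Sum>l\<in>UNIV. \<Sum>m\<in>UNIV. G y $ l $ w * Gam G l i m y * Gam G m j k y)"
      by (simp add: sum_distrib_left mult.assoc)
    also have "\<dots> = (\<Sum>m\<in>UNIV. \<Sum>l\<in>UNIV. G y $ l $ w * Gam G l i m y * Gam G m j k y)"
      by (rule sum.swap)
    finally show ?thesis by (simp add: sum_distrib_right)
  qed
  then show ?thesis unfolding lower_Gam[OF assms] by (simp add: sum_distrib_left mult.assoc)
qed

lemma Rlow_eq_Gam1:
  assumes "y \<in> S"
  shows "Rlow G y i j k w = 1/2 * (pd i (Gam1 G w j k) y - pd j (Gam1 G w i k) y)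
            - 1/2 * (\<Sum>l\<in>UNIV. Gam1 G l i w y * Gam G l j k y)
            + 1/2 * (\<Sum>l\<in>UNIV. Gam1 G l j w y * Gam G l i k y)"
proof -
  have "Rlow G y i j k w = (\<Sum>l\<in>UNIV. G y $ l $ w * pd i (Gam G l j k) y)
      - (\<Sum>l\<in>UNIV. G y $ l $ w * pd j (Gam G l i k) y)
      + (\<Sum>l\<in>UNIV. G y $ l $ w * (\<Sum>m\<in>UNIV. Gam G l i m y * Gam G m j k y))
      - (\<Sum>l\<in>UNIV. G y $ l $ w * (\<Sum>m\<in>UNIV. Gam G l j m y * Gam G m i k y))"
    unfolding Rlow_def Rup_def by (simp add: sum_subtractf sum.distrib algebra_simps)
  also have "\<dots> = 1/2 * (pd i (Gam1 G w j k) y - pd j (Gam1 G w i k) y)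
      - (\<Sum>l\<in>UNIV. (pd i (\<lambda>z. G z $ w $ l) y - 1/2 * Gam1 G w i l y) * Gam G l j k y)
      + (\<Sum>l\<in>UNIV. (pd j (\<lambda>z. G z $ w $ l) y - 1/2 * Gam1 G w j l y) * Gam G l i k y)"
    unfolding lower_pd_Gam[OF assms] lower_Gam_Gam[OF assms]
    by (simp add: sum_subtractf sum_distrib_left algebra_simps)
  finally show ?thesis
    unfolding pd_metric_eq_Gam1[OF assms] by (simp add: sum_distrib_left algebra_simps)
qed

lemma sum_Gam1_Gam_commute:
  assumes "y \<in> S"
  shows "(\<Sum>l\<in>UNIV. Gam1 G l a b y * Gam G l c d y) = (\<Sum>l\<in>UNIV. Gam1 G l c d y * Gam G l a b y)"
proof -
  have "(\<Sum>m\<in>UNIV. (\<Sum>l\<in>UNIV. Gam1 G l a b y * ginv G y $ l $ m) * Gam1 G m c d y)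
      = (\<Sum>m\<in>UNIV. \<Sum>l\<in>UNIV. Gam1 G m c d y * ginv G y $ m $ l * Gam1 G l a b y)"
    using ginv_symmetric[OF assms] by (simp add: sum_distrib_left sum_distrib_right algebra_simps)
  also have "\<dots> = (\<Sum>l\<in>UNIV. (\<Sum>m\<in>UNIV. Gam1 G m c d y * ginv G y $ m $ l) * Gam1 G l a b y)"
    by (subst sum.swap) (simp add: sum_distrib_right)
  finally show ?thesis unfolding sum_mult_Gam by simp
qed

lemma pd_Gam1_antisym:
  "y \<in> S \<Longrightarrow> pd i (Gam1 G w j k) y - pd j (Gam1 G w i k) y = - (pd i (Gam1 G k j w) y - pd j (Gam1 G k i w) y)"
  unfolding pd_Gam1 using pd2_metric_commute[of y i j] by simp

lemma Rlow_antisym_last: "y \<in> S \<Longrightarrow> Rlow G y i j k w = - Rlow G y i j w k"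
  unfolding Rlow_eq_Gam1 using pd_Gam1_antisym[of y i w j k] sum_Gam1_Gam_commute[of y i w j k]
    sum_Gam1_Gam_commute[of y j w i k]
  by (simp add: algebra_simps)

lemma R4_antisym_last: "y \<in> S \<Longrightarrow> R4 G y X Y Z W = - R4 G y X Y W Z"
  by (rule R4_antisym_lastI) (rule Rlow_antisym_last)

end

section \<open>The extension metric\<close>

lemma sum_UNIV_option: "(\<Sum>l\<in>(UNIV :: 'a::finite option set). f l) = f None + (\<Sum>c\<in>UNIV. f (Some c))"
  by (simp add: UNIV_option_conv sum.insert sum.reindex)

lemma bounded_linear_tco: "bounded_linear (tco :: real^('n::finite option) \<Rightarrow> real)"
  unfolding tco_def[abs_def] by (rule bounded_linear_vec_nth)

lemma bounded_linear_pco: "bounded_linear (pco :: real^('n::finite option) \<Rightarrow> real^'n)"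
  unfolding pco_def[abs_def]
  by (auto simp: linear_iff vec_eq_iff intro: linear_conv_bounded_linear[THEN iffD1])

lemma pco_axis [simp]:
  "pco (axis (Some k) 1 :: real^('n::finite option)) = axis k 1"
  "pco (axis None 1 :: real^('n::finite option)) = 0"
  unfolding pco_def by (auto simp: vec_eq_iff axis_def)

lemma tco_axis [simp]:
  "tco (axis (Some k) 1 :: real^('n::finite option)) = 0"
  "tco (axis None 1 :: real^('n::finite option)) = 1"
  unfolding tco_def by (auto simp: axis_def)

lemma pd_lift_pco:
  assumes "f differentiable (at (pco y))"
  shows "pd (Some k) (\<lambda>y. f (pco y)) y = pd k f (pco y)" "pd None (\<lambda>y. f (pco y)) y = 0"
    "(\<lambda>y. f (pco y)) differentiable (at y)"
proof -
  let ?F = "frechet_derivative f (at (pco y))"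
  have "(f has_derivative ?F) (at (pco y))" using assms frechet_derivative_works by blast
  then have D: "((\<lambda>y. f (pco y)) has_derivative (\<lambda>v. ?F (pco v))) (at y)"
    and l: "linear ?F"
    using has_derivative_compose[OF bounded_linear_imp_has_derivative[OF bounded_linear_pco]]
      has_derivative_linear by blast+
  show "pd (Some k) (\<lambda>y. f (pco y)) y = pd k f (pco y)"
    using pd_has_derivative[OF D] by (simp add: pd_def)
  show "pd None (\<lambda>y. f (pco y)) y = 0"
    using pd_has_derivative[OF D] linear_0[OF l] by simp
  show "(\<lambda>y. f (pco y)) differentiable (at y)"
    using D unfolding differentiable_def by blast
qed

lemma pd_lift_product:
  assumes f: "f differentiable (at (pco y))" and \<phi>: "(\<phi> has_real_derivative d) (at (tco y))"
  shows "pd None (\<lambda>y. \<phi> (tco y) * f (pco y)) y = d * f (pco y)"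
    "pd (Some k) (\<lambda>y. \<phi> (tco y) * f (pco y)) y = \<phi> (tco y) * pd k f (pco y)"
    "(\<lambda>y. \<phi> (tco y) * f (pco y)) differentiable (at y)"
proof -
  have D: "((\<lambda>y. \<phi> (tco y)) has_derivative (\<lambda>v. d * tco v)) (at y)"
    using has_derivative_compose[OF bounded_linear_imp_has_derivative[OF bounded_linear_tco]
        has_field_derivative_imp_has_derivative[OF \<phi>]] by (simp add: o_def)
  then have d1: "(\<lambda>y. \<phi> (tco y)) differentiable (at y)" unfolding differentiable_def by blast
  note d2 = pd_lift_pco[OF f]
  show "pd None (\<lambda>y. \<phi> (tco y) * f (pco y)) y = d * f (pco y)"
    using pd_mult[OF d1 d2(3), of None] pd_has_derivative[OF D] d2(2) by simp
  show "pd (Some k) (\<lambda>y. \<phi> (tco y) * f (pco y)) y = \<phi> (tco y) * pd k f (pco y)"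
    using pd_mult[OF d1 d2(3), of "Some k"] pd_has_derivative[OF D] d2(1) by simp
  show "(\<lambda>y. \<phi> (tco y) * f (pco y)) differentiable (at y)" using d1 d2(3) by (rule differentiable_mult)
qed

lemma has_real_derivative_cos2: "((\<lambda>t. c * cos (2 * t)) has_real_derivative (- 2 * c * sin (2 * t))) (at t)"
  by (auto intro!: derivative_eq_intros)

lemma has_real_derivative_sin2: "((\<lambda>t. c * sin (2 * t)) has_real_derivative (2 * c * cos (2 * t))) (at t)"
  by (auto intro!: derivative_eq_intros)

lemma ext_metric_nth [simp]:
  "ext_metric J h y $ None $ None = 1"
  "ext_metric J h y $ None $ Some i = 0"
  "ext_metric J h y $ Some i $ None = 0"
  by (simp_all add: ext_metric_def)

lemma ext_metric_Some_Some:
  "ext_metric J h y $ Some i $ Some j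
     = cos (2 * tco y) * h (pco y) $ i $ j - sin (2 * tco y) * (h (pco y) ** J (pco y)) $ i $ j"
  by (simp add: ext_metric_def htilde_def)

lemma ext_metric_None_fun:
  "(\<lambda>y. ext_metric J h y $ None $ j) = (\<lambda>y. if j = None then 1 else 0)"
  "(\<lambda>y. ext_metric J h y $ j $ None) = (\<lambda>y. if j = None then 1 else 0)"
  by (intro ext; cases j; simp)+

lemma pd_ext_metric_None [simp]:
  "pd k (\<lambda>y. ext_metric J h y $ None $ j) = (\<lambda>y. 0)"
  "pd k (\<lambda>y. ext_metric J h y $ j $ None) = (\<lambda>y. 0)"
  unfolding ext_metric_None_fun by (cases "j = None"; simp)+

definition hor_metric :: "(real^'n \<Rightarrow> real^'n^'n) \<Rightarrow> (real^'n \<Rightarrow> real^'n^'n) \<Rightarrow> real^('n::finite option) \<Rightarrow> real^'n^'n" where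
  "hor_metric J h y = h (pco y) ** (cos (2 * tco y) *\<^sub>R mat 1 - sin (2 * tco y) *\<^sub>R J (pco y))"

definition hor_metric_inv :: "(real^'n \<Rightarrow> real^'n^'n) \<Rightarrow> (real^'n \<Rightarrow> real^'n^'n) \<Rightarrow> real^('n::finite option) \<Rightarrow> real^'n^'n" where
  "hor_metric_inv J h y = (cos (2 * tco y) *\<^sub>R mat 1 + sin (2 * tco y) *\<^sub>R J (pco y)) ** matrix_inv (h (pco y))"

definition ext_metric_inv :: "(real^'n \<Rightarrow> real^'n^'n) \<Rightarrow> (real^'n \<Rightarrow> real^'n^'n) \<Rightarrow> real^('n::finite option) \<Rightarrow> real^('n option)^('n option)" where
  "ext_metric_inv J h y = (\<chi> i j. case (i, j) of
       (None, None) \<Rightarrow> 1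
     | (Some i, Some j) \<Rightarrow> hor_metric_inv J h y $ i $ j
     | _ \<Rightarrow> 0)"

lemma ext_metric_inv_nth [simp]:
  "ext_metric_inv J h y $ None $ None = 1" "ext_metric_inv J h y $ None $ Some j = 0"
  "ext_metric_inv J h y $ Some i $ None = 0" "ext_metric_inv J h y $ Some i $ Some j = hor_metric_inv J h y $ i $ j"
  by (simp_all add: ext_metric_inv_def)

lemma ext_metric_Some_Some_hor: "ext_metric J h y $ Some i $ Some j = hor_metric J h y $ i $ j"
  unfolding ext_metric_Some_Some hor_metric_def
  by (simp add: matrix_diff_ldistrib matrix_scalar_ac scalar_matrix_assoc[symmetric])

lemma Gam_ext_None_None: "Gam (ext_metric J h) k None None = (\<lambda>y. 0)"
  by (rule ext) (simp add: Gam_def)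

lemma Gam_ext_Some_None:
  "Gam (ext_metric J h) k (Some a) None y =
     1/2 * (\<Sum>c\<in>UNIV. ginv (ext_metric J h) y $ k $ Some c * pd None (\<lambda>z. ext_metric J h z $ Some a $ Some c) y)"
  unfolding Gam_def by (simp add: sum_UNIV_option)

lemma Gam_ext_None_Some:
  "Gam (ext_metric J h) k None (Some a) y = Gam (ext_metric J h) k (Some a) None y"
  unfolding Gam_def by (simp add: sum_UNIV_option)

lemma ext_phi_axis_nth:
  "(ext_phi J x *v axis j 1) $ w = (case (w, j) of (Some d, Some c) \<Rightarrow> J (pco x) $ d $ c | _ \<Rightarrow> 0)"
  unfolding matrix_vector_mult_nth by (simp add: ext_phi_def)

lemma ext_phi_xi [simp]: "ext_phi J x *v axis None 1 = 0"
  by (simp add: vec_eq_iff ext_phi_axis_nth split: option.split)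

lemma sum_ext_phi_axis:
  "(\<Sum>w\<in>UNIV. (ext_phi J x *v axis (Some f) 1) $ w * F w) = (\<Sum>g\<in>UNIV. J (pco x) $ g $ f * F (Some g))"
  by (simp add: sum_UNIV_option ext_phi_axis_nth)

lemma gv_ext_xi: "gv (ext_metric J h) x ext_xi V = V $ None"
  unfolding ext_xi_def gv_axis_left by (simp add: sum_UNIV_option)

lemma gv_ext_diag:
  "gv (ext_metric J h) x V V
     = (V $ None)^2 + (\<Sum>i\<in>UNIV. \<Sum>j\<in>UNIV. V $ Some i * V $ Some j * ext_metric J h x $ Some i $ Some j)"
  unfolding gv_def by (simp add: sum_UNIV_option power2_eq_square algebra_simps)

lemma hor_metric_inv_nth:
  "hor_metric_inv J h y $ i $ j = cos (2 * tco y) * matrix_inv (h (pco y)) $ i $ j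
                                  + sin (2 * tco y) * (J (pco y) ** matrix_inv (h (pco y))) $ i $ j"
  by (simp add: hor_metric_inv_def matrix_add_rdistrib scalar_matrix_assoc[symmetric])

locale almost_norden_chart =
  fixes U :: "(real^'n::finite) set" and J h :: "real^'n \<Rightarrow> real^'n^'n"
  assumes norden: "almost_norden U J h"
begin

lemma open_chart: "open U"
  using norden unfolding almost_norden_def by blast

lemma h_symmetric:
  assumes "p \<in> U" shows "h p $ i $ j = h p $ j $ i"
proof -
  have "transpose (h p) = h p" using norden assms unfolding almost_norden_def by blast
  then have "transpose (h p) $ j $ i = h p $ j $ i" by simp
  then show ?thesis by (simp add: transpose_def)
qed

lemma J_square: "p \<in> U \<Longrightarrow> J p ** J p = - mat 1"
  using norden unfolding almost_norden_def by blast

lemma h_inverse: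
  assumes "p \<in> U" shows "h p ** matrix_inv (h p) = mat 1 \<and> matrix_inv (h p) ** h p = mat 1"
proof -
  have "det (h p) \<noteq> 0" using norden assms unfolding almost_norden_def by blast
  then show ?thesis by (simp add: invertible_det_nz invertible_matrix_inv)
qed

text \<open>htilde is symmetric: apply the Norden identity to e_i and J e_j and use J^2 = -1.\<close>

lemma hJ_symmetric: "p \<in> U \<Longrightarrow> (h p ** J p) $ i $ j = (h p ** J p) $ j $ i"
proof -
  assume p: "p \<in> U"
  have N: "gv h p (J p *v X) (J p *v Y) = - gv h p X Y" for X Y
    using norden p unfolding almost_norden_def by blast
  have JJv: "J p *v (J p *v v) = - v" for v
    using J_square[OF p] by (simp add: matrix_vector_mul_assoc vec_eq_iff matrix_vector_mult_nth mat_def sum_negf)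
  have gv_left: "gv h p (axis i 1) (J p *v axis j 1) = (h p ** J p) $ i $ j" for i j
    unfolding gv_axis_left matrix_mult_nth matrix_vector_mult_nth by simp
  have gv_right: "gv h p (J p *v axis j 1) (axis i 1) = (h p ** J p) $ i $ j" for i j
    unfolding gv_axis_right matrix_mult_nth matrix_vector_mult_nth
    using h_symmetric[OF p] by (simp add: mult.commute)
  have "(h p ** J p) $ i $ j = - gv h p (J p *v axis i 1) (J p *v (J p *v axis j 1))"
    using N gv_left by simp
  also have "\<dots> = gv h p (J p *v axis i 1) (axis j 1)"
    unfolding JJv gv_def by (simp add: sum_negf[symmetric])
  finally show ?thesis using gv_right by simp
qed

lemma twice_differentiable_h: "twice_differentiable_on U (\<lambda>p. h p $ i $ j)"
  using norden unfolding almost_norden_def by (blast intro: smooth_fun_imp_twice_differentiable_on)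

lemma twice_differentiable_J: "twice_differentiable_on U (\<lambda>p. J p $ i $ j)"
  using norden unfolding almost_norden_def by (blast intro: smooth_fun_imp_twice_differentiable_on)

lemma twice_differentiable_hJ: "twice_differentiable_on U (\<lambda>p. (h p ** J p) $ i $ j)"
  unfolding matrix_mult_nth
  by (intro twice_differentiable_on_sum[OF open_chart] twice_differentiable_on_mult[OF open_chart]
        twice_differentiable_h twice_differentiable_J) auto

lemma open_ext_dom: "open (ext_dom U)"
proof -
  have "ext_dom U = tco -` {0<..} \<inter> pco -` U" unfolding ext_dom_def by auto
  then show ?thesis
    using open_chart linear_continuous_on[OF bounded_linear_tco] linear_continuous_on[OF bounded_linear_pco]
    by (metis open_Int open_greaterThan open_vimage)
qed

lemma pco_ext_dom: "y \<in> ext_dom U \<Longrightarrow> pco y \<in> U"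
  unfolding ext_dom_def by auto

lemma pd_ext_metric_Some_Some:
  assumes y: "y \<in> ext_dom U"
  shows "pd None (\<lambda>y. ext_metric J h y $ Some i $ Some j) y =
          - 2 * sin (2 * tco y) * h (pco y) $ i $ j - 2 * cos (2 * tco y) * (h (pco y) ** J (pco y)) $ i $ j"
    "pd (Some k) (\<lambda>y. ext_metric J h y $ Some i $ Some j) y =
          cos (2 * tco y) * pd k (\<lambda>p. h p $ i $ j) (pco y) - sin (2 * tco y) * pd k (\<lambda>p. (h p ** J p) $ i $ j) (pco y)"
    "(\<lambda>y. ext_metric J h y $ Some i $ Some j) differentiable (at y)"
proof -
  have p: "pco y \<in> U" using pco_ext_dom[OF y] .
  note L1 = pd_lift_product[OF twice_differentiable_onD(1)[OF twice_differentiable_h p]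
      has_real_derivative_cos2[of 1, simplified]]
  note L2 = pd_lift_product[OF twice_differentiable_onD(1)[OF twice_differentiable_hJ p]
      has_real_derivative_sin2[of 1, simplified]]
  have e: "(\<lambda>y. ext_metric J h y $ Some i $ Some j) = (\<lambda>y. cos (2 * tco y) * h (pco y) $ i $ j
                                                      - sin (2 * tco y) * (h (pco y) ** J (pco y)) $ i $ j)"
    using ext_metric_Some_Some by blast
  show "pd None (\<lambda>y. ext_metric J h y $ Some i $ Some j) y =
          - 2 * sin (2 * tco y) * h (pco y) $ i $ j - 2 * cos (2 * tco y) * (h (pco y) ** J (pco y)) $ i $ j"
    unfolding e using pd_diff[OF L1(3) L2(3), of None] L1(1) L2(1) by simp
  show "pd (Some k) (\<lambda>y. ext_metric J h y $ Some i $ Some j) y =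
          cos (2 * tco y) * pd k (\<lambda>p. h p $ i $ j) (pco y) - sin (2 * tco y) * pd k (\<lambda>p. (h p ** J p) $ i $ j) (pco y)"
    unfolding e using pd_diff[OF L1(3) L2(3), of "Some k"] L1(2) L2(2) by simp
  show "(\<lambda>y. ext_metric J h y $ Some i $ Some j) differentiable (at y)"
    unfolding e using L1(3) L2(3) by (rule differentiable_diff)
qed

lemma ext_metric_differentiable:
  assumes "y \<in> ext_dom U" shows "(\<lambda>y. ext_metric J h y $ i $ j) differentiable (at y)"
proof (cases "i = None \<or> j = None")
  case True
  then have "(\<lambda>y. ext_metric J h y $ i $ j) = (\<lambda>y. if i = j then 1 else 0)"
    by (cases i; cases j) auto
  then show ?thesis by simp
next
  case False
  then show ?thesis using pd_ext_metric_Some_Some(3)[OF assms] by auto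
qed

lemma pd_ext_metric_differentiable:
  assumes y: "y \<in> ext_dom U" shows "pd k (\<lambda>y. ext_metric J h y $ i $ j) differentiable (at y)"
proof (cases "i = None \<or> j = None")
  case True
  then show ?thesis by (elim disjE) simp_all
next
  case False
  then obtain i' j' where ij: "i = Some i'" "j = Some j'" by auto
  have p: "pco y \<in> U" using pco_ext_dom[OF y] .
  note h = twice_differentiable_onD[OF twice_differentiable_h p]
  note hJ = twice_differentiable_onD[OF twice_differentiable_hJ p]
  show ?thesis
  proof (cases k)
    case None
    let ?g = "\<lambda>z. - 2 * sin (2 * tco z) * h (pco z) $ i' $ j' - 2 * cos (2 * tco z) * (h (pco z) ** J (pco z)) $ i' $ j'"
    have "\<And>z. z \<in> ext_dom U \<Longrightarrow> ?g z = pd k (\<lambda>y. ext_metric J h y $ i $ j) z"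
      using pd_ext_metric_Some_Some(1) None ij by simp
    moreover have "?g differentiable (at y)"
      using pd_lift_product(3)[OF h(1) has_real_derivative_sin2[of "-2"]]
        pd_lift_product(3)[OF hJ(1) has_real_derivative_cos2[of 2]]
      by (intro differentiable_diff) simp_all
    ultimately show ?thesis by (rule differentiable_transform_within_open[OF open_ext_dom y])
  next
    case (Some k')
    let ?g = "\<lambda>z. cos (2 * tco z) * pd k' (\<lambda>p. h p $ i' $ j') (pco z)
                 - sin (2 * tco z) * pd k' (\<lambda>p. (h p ** J p) $ i' $ j') (pco z)"
    have "\<And>z. z \<in> ext_dom U \<Longrightarrow> ?g z = pd k (\<lambda>y. ext_metric J h y $ i $ j) z"
      using pd_ext_metric_Some_Some(2) Some ij by simp
    moreover have "?g differentiable (at y)"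
      using pd_lift_product(3)[OF h(2) has_real_derivative_cos2[of 1]]
        pd_lift_product(3)[OF hJ(2) has_real_derivative_sin2[of 1]]
      by (intro differentiable_diff) simp_all
    ultimately show ?thesis by (rule differentiable_transform_within_open[OF open_ext_dom y])
  qed
qed

lemma ext_metric_symmetric: "y \<in> ext_dom U \<Longrightarrow> ext_metric J h y $ i $ j = ext_metric J h y $ j $ i"
  using h_symmetric[OF pco_ext_dom] hJ_symmetric[OF pco_ext_dom]
  by (cases i; cases j) (simp_all add: ext_metric_Some_Some)

lemma hor_metric_right_inverse: "y \<in> ext_dom U \<Longrightarrow> hor_metric J h y ** hor_metric_inv J h y = mat 1"
proof -
  assume y: "y \<in> ext_dom U"
  let ?c = "cos (2 * tco y)" and ?s = "sin (2 * tco y)"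
  have "hor_metric J h y ** hor_metric_inv J h y
      = h (pco y) ** ((?c *\<^sub>R mat 1 - ?s *\<^sub>R J (pco y)) ** (?c *\<^sub>R mat 1 + ?s *\<^sub>R J (pco y))) ** matrix_inv (h (pco y))"
    unfolding hor_metric_def hor_metric_inv_def by (simp add: matrix_mul_assoc)
  also have "\<dots> = mat 1"
    using cos_sin_J_inverse[OF J_square[OF pco_ext_dom[OF y]], of ?c ?s] h_inverse[OF pco_ext_dom[OF y]]
    by (simp add: sin_cos_squared_add3)
  finally show ?thesis .
qed

lemma ext_metric_right_inverse: "y \<in> ext_dom U \<Longrightarrow> ext_metric J h y ** ext_metric_inv J h y = mat 1"
proof -
  assume y: "y \<in> ext_dom U"
  have "(ext_metric J h y ** ext_metric_inv J h y) $ i $ j = mat 1 $ i $ j" for i j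
  proof -
    have "(ext_metric J h y ** ext_metric_inv J h y) $ i $ j = ext_metric J h y $ i $ None * ext_metric_inv J h y $ None $ j
       + (\<Sum>c\<in>UNIV. ext_metric J h y $ i $ Some c * ext_metric_inv J h y $ Some c $ j)"
      by (simp add: matrix_mult_nth sum_UNIV_option)
    also have "\<dots> = mat 1 $ i $ j"
    proof (cases i; cases j)
      fix i' j' assume "i = Some i'" "j = Some j'"
      moreover have "(\<Sum>c\<in>UNIV. hor_metric J h y $ i' $ c * hor_metric_inv J h y $ c $ j') = mat 1 $ i' $ j'"
        using hor_metric_right_inverse[OF y] by (simp add: matrix_mult_nth[symmetric])
      ultimately show ?thesis by (simp add: ext_metric_Some_Some_hor mat_def)
    qed (simp_all add: mat_def)
    finally show ?thesis .
  qed
  then show ?thesis by (simp add: vec_eq_iff)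
qed

lemma ginv_ext_metric: "y \<in> ext_dom U \<Longrightarrow> ginv (ext_metric J h) y = ext_metric_inv J h y"
  unfolding ginv_def by (rule matrix_inv_unique[OF ext_metric_right_inverse])

lemma hor_metric_J:
  "y \<in> ext_dom U \<Longrightarrow> hor_metric J h y ** J (pco y)
     = cos (2 * tco y) *\<^sub>R (h (pco y) ** J (pco y)) + sin (2 * tco y) *\<^sub>R h (pco y)"
proof -
  assume y: "y \<in> ext_dom U"
  let ?c = "cos (2 * tco y)" and ?s = "sin (2 * tco y)" and ?p = "pco y"
  have "hor_metric J h y ** J ?p = h ?p ** ((?c *\<^sub>R mat 1 - ?s *\<^sub>R J ?p) ** J ?p)"
    by (simp add: hor_metric_def matrix_mul_assoc)
  also have "(?c *\<^sub>R mat 1 - ?s *\<^sub>R J ?p) ** J ?p = ?c *\<^sub>R J ?p + ?s *\<^sub>R mat 1"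
    unfolding matrix_diff_rdistrib using J_square[OF pco_ext_dom[OF y]]
    by (simp add: scalar_matrix_assoc[symmetric])
  also have "h ?p ** (?c *\<^sub>R J ?p + ?s *\<^sub>R mat 1) = ?c *\<^sub>R (h ?p ** J ?p) + ?s *\<^sub>R h ?p"
    by (simp add: matrix_add_ldistrib matrix_scalar_ac scalar_matrix_assoc[symmetric])
  finally show ?thesis .
qed

lemma pd_None_ext_metric:
  "y \<in> ext_dom U \<Longrightarrow> pd None (\<lambda>z. ext_metric J h z $ Some i $ Some j) y = - 2 * (hor_metric J h y ** J (pco y)) $ j $ i"
proof -
  assume y: "y \<in> ext_dom U"
  then show ?thesis
    using pd_ext_metric_Some_Some(1)[OF y, of i j] hor_metric_J[OF y]
      h_symmetric[OF pco_ext_dom[OF y], of i j] hJ_symmetric[OF pco_ext_dom[OF y], of i j]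
    by (simp add: algebra_simps)
qed

lemma Gam_ext_Some_Some_None:
  assumes y: "y \<in> ext_dom U"
  shows "Gam (ext_metric J h) (Some d) (Some a) None y = - J (pco y) $ d $ a"
proof -
  have left_inv: "hor_metric_inv J h y ** hor_metric J h y = mat 1"
    using hor_metric_right_inverse[OF y] matrix_left_right_inverse by blast
  have "Gam (ext_metric J h) (Some d) (Some a) None y
      = - (\<Sum>c\<in>UNIV. hor_metric_inv J h y $ d $ c * (hor_metric J h y ** J (pco y)) $ c $ a)"
    unfolding Gam_ext_Some_None ginv_ext_metric[OF y] pd_None_ext_metric[OF y]
    by (simp add: sum_distrib_left sum_negf)
  also have "\<dots> = - (hor_metric_inv J h y ** (hor_metric J h y ** J (pco y))) $ d $ a"
    by (simp add: matrix_mult_nth)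
  also have "\<dots> = - J (pco y) $ d $ a"
    using left_inv by (simp add: matrix_mul_assoc)
  finally show ?thesis .
qed

lemma Rup_ext_Some_Some_None_None:
  assumes x: "x \<in> ext_dom U"
  shows "Rup (ext_metric J h) (Some d) (Some a) None None x = (if d = a then 1 else 0)"
proof -
  have p: "pco x \<in> U" using pco_ext_dom[OF x] .
  have "pd None (Gam (ext_metric J h) (Some d) (Some a) None) x = pd None (\<lambda>y. - J (pco y) $ d $ a) x"
    using Gam_ext_Some_Some_None by (intro pd_transform_within_open[OF open_ext_dom x]) auto
  also have "\<dots> = 0"
    using twice_differentiable_onD(1)[OF twice_differentiable_J p]
    by (intro pd_lift_pco(2)[where f = "\<lambda>q. - J q $ d $ a"] differentiable_minus)
  finally have pd_Gam: "pd None (Gam (ext_metric J h) (Some d) (Some a) None) x = 0" .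
  have "(\<Sum>c\<in>UNIV. J (pco x) $ d $ c * J (pco x) $ c $ a) = - (if d = a then 1 else 0)"
    using J_square[OF p] by (simp add: matrix_mult_nth[symmetric] mat_def)
  then show ?thesis
    unfolding Rup_def using pd_Gam
    by (simp add: sum_UNIV_option Gam_ext_None_None Gam_ext_None_Some
        Gam_ext_Some_Some_None[OF x] sum_negf)
qed

text \<open>Along xi the extension looks like a space of constant curvature 1.\<close>

lemma Rlow_ext_Some_None_None_Some:
  "x \<in> ext_dom U \<Longrightarrow> Rlow (ext_metric J h) x (Some a) None None (Some b) = ext_metric J h x $ Some a $ Some b"
proof -
  assume x: "x \<in> ext_dom U"
  have "(\<Sum>c\<in>UNIV. ext_metric J h x $ Some c $ Some b * (if c = a then 1 else 0))
      = (\<Sum>c\<in>UNIV. (if a = c then 1 else 0) * ext_metric J h x $ Some c $ Some b)"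
    by (intro sum.cong) auto
  then show ?thesis
    unfolding Rlow_def by (simp add: sum_UNIV_option Rup_ext_Some_Some_None_None[OF x])
qed

end

section \<open>Two-dimensional base\<close>

definition adj2 :: "'n \<Rightarrow> 'n \<Rightarrow> real^'n^'n \<Rightarrow> real^'n^'n" where
  "adj2 a b M = (\<chi> i j. if i = j then (if i = a then M$b$b else M$a$a) else - M$i$j)"

definition det2 :: "'n \<Rightarrow> 'n \<Rightarrow> real^'n^'n \<Rightarrow> real" where
  "det2 a b M = M$a$a * M$b$b - M$a$b * M$b$a"

locale pair_UNIV =
  fixes a b :: "'n::finite"
  assumes pair_neq: "a \<noteq> b" and UNIV_pair: "(UNIV :: 'n set) = {a, b}"
begin

lemma sum_UNIV_pair: "(\<Sum>i\<in>UNIV. f i) = f a + f b"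
  using pair_neq by (simp add: UNIV_pair)

lemma pair_cases: "i = a \<or> i = b"
  using UNIV_pair by auto

lemma card_UNIV_pair: "CARD('n) = 2"
  using pair_neq by (simp add: UNIV_pair)

lemma matrix_mult_nth_pair: "(M ** N) $ i $ j = M$i$a * N$a$j + M$i$b * N$b$j"
  by (simp add: matrix_mult_nth sum_UNIV_pair)

lemma matrix_eq_pair:
  "(M :: 'x^'n^'n) = N \<longleftrightarrow> M$a$a = N$a$a \<and> M$a$b = N$a$b \<and> M$b$a = N$b$a \<and> M$b$b = N$b$b"
proof
  assume "M$a$a = N$a$a \<and> M$a$b = N$a$b \<and> M$b$a = N$b$a \<and> M$b$b = N$b$b"
  then have "M$i$j = N$i$j" for i j using pair_cases[of i] pair_cases[of j] by auto
  then show "M = N" by (simp add: vec_eq_iff)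
qed simp

lemma adj2_mult: "M ** adj2 a b M = det2 a b M *\<^sub>R mat 1" "adj2 a b M ** M = det2 a b M *\<^sub>R mat 1"
  unfolding matrix_eq_pair matrix_mult_nth_pair using pair_neq
  by (auto simp: adj2_def det2_def mat_def algebra_simps)

lemma det2_nonzero:
  assumes "invertible (M :: real^'n^'n)" shows "det2 a b M \<noteq> 0"
proof
  assume d: "det2 a b M = 0"
  obtain N where N: "M ** N = mat 1" using assms unfolding invertible_def by blast
  have "adj2 a b M = (adj2 a b M ** M) ** N" using N by (simp add: matrix_mul_assoc[symmetric])
  then have "adj2 a b M = 0" using adj2_mult(2) d by simp
  then have "M = 0" using pair_neq unfolding matrix_eq_pair by (auto simp: adj2_def vec_eq_iff)
  then have "(mat 1 :: real^'n^'n) $ a $ a = 0" using N by simp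
  then show False by (simp add: mat_def)
qed

lemma matrix_inv_pair:
  assumes "det2 a b M \<noteq> 0" shows "matrix_inv (M :: real^'n^'n) = (1 / det2 a b M) *\<^sub>R adj2 a b M"
  using assms
  by (intro matrix_inv_unique) (simp add: matrix_scalar_ac scalar_matrix_assoc[symmetric] adj2_mult)

lemma matrix_inv_differentiable:
  fixes M :: "'a::real_normed_vector \<Rightarrow> real^'n^'n"
  assumes U: "open U" "p \<in> U" and inv: "\<And>q. q \<in> U \<Longrightarrow> invertible (M q)"
    and dM: "\<And>k l. (\<lambda>q. M q $ k $ l) differentiable (at p)"
  shows "(\<lambda>q. matrix_inv (M q) $ i $ j) differentiable (at p)"
proof -
  let ?g = "\<lambda>q. (if i = j then (if i = a then M q $ b $ b else M q $ a $ a) else - M q $ i $ j) / det2 a b (M q)"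
  have "\<And>q. q \<in> U \<Longrightarrow> ?g q = matrix_inv (M q) $ i $ j"
    using matrix_inv_pair det2_nonzero inv by (simp add: adj2_def)
  moreover have "?g differentiable (at p)"
  proof (rule differentiable_divide)
    show "(\<lambda>q. if i = j then (if i = a then M q $ b $ b else M q $ a $ a) else - M q $ i $ j) differentiable (at p)"
      using dM by (cases "i = j"; cases "i = a") (auto intro: differentiable_minus)
    show "(\<lambda>q. det2 a b (M q)) differentiable (at p)"
      unfolding det2_def using dM by (intro differentiable_diff differentiable_mult)
  qed (use det2_nonzero[OF inv[OF U(2)]] in simp)
  ultimately show ?thesis by (rule differentiable_transform_within_open[OF U])
qed

lemma trace_det_of_square_minus_one:
  assumes "(M :: real^'n^'n) ** M = - mat 1"
  shows "M$a$a + M$b$b = 0" "det2 a b M = 1"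
proof -
  have e: "M$i$a * M$a$j + M$i$b * M$b$j = - (if i = j then 1 else 0)" for i j
    using arg_cong[OF assms, of "\<lambda>X. X $ i $ j"] by (simp add: matrix_mult_nth_pair mat_def)
  have "M$a$b \<noteq> 0"
  proof
    assume "M$a$b = 0"
    then have "M$a$a * M$a$a = -1" using e[of a a] by simp
    moreover have "M$a$a * M$a$a \<ge> 0" by simp
    ultimately show False by simp
  qed
  moreover have "M$a$b * (M$a$a + M$b$b) = 0" using e[of a b] pair_neq by (simp add: algebra_simps)
  ultimately show tr: "M$a$a + M$b$b = 0" by simp
  then have "det2 a b M = - (M$a$a * M$a$a + M$a$b * M$b$a)"
    unfolding det2_def by (simp add: eq_neg_iff_add_eq_0[symmetric])
  then show "det2 a b M = 1" using e[of a a] by simp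
qed

lemma sum_pair_alternating:
  assumes "\<And>m w. R m w = - R w m"
  shows "(\<Sum>m\<in>UNIV. \<Sum>w\<in>UNIV. P$m$d * P$w$f * R m w) = det2 a b P * R d f"
proof -
  have "R a a = 0" "R b b = 0" "R b a = - R a b" using assms[of a a] assms[of b b] assms[of b a] by simp_all
  then show ?thesis
    using pair_cases[of d] pair_cases[of f]
    by (auto simp: sum_UNIV_pair det2_def algebra_simps)
qed

end

definition levi_civita :: "'n \<Rightarrow> 'n \<Rightarrow> 'n \<Rightarrow> real" where
  "levi_civita a u v = (if u = v then 0 else if u = a then 1 else -1)"

definition hor_scalar_curv :: "(real^'n \<Rightarrow> real^'n^'n) \<Rightarrow> (real^'n \<Rightarrow> real^'n^'n) \<Rightarrow> real^('n::finite option) \<Rightarrow> real" where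
  "hor_scalar_curv J h x = (\<Sum>c\<in>UNIV. \<Sum>d\<in>UNIV. hor_metric_inv J h x $ c $ d *
      (\<Sum>e\<in>UNIV. \<Sum>f\<in>UNIV. hor_metric_inv J h x $ e $ f * Rlow (ext_metric J h) x (Some e) (Some c) (Some d) (Some f)))"

locale almost_norden_surface = almost_norden_chart U J h + pair_UNIV a b
  for U :: "(real^'n::finite) set" and J h :: "real^'n \<Rightarrow> real^'n^'n" and a b :: 'n
begin

text \<open>Smoothness of the inverse metric comes from the adjugate formula; this is the only place
  where the curvature symmetries of the extension use that the base is 2-dimensional.\<close>

lemma h_inv_differentiable: "p \<in> U \<Longrightarrow> (\<lambda>q. matrix_inv (h q) $ i $ j) differentiable (at p)"
  using h_inverse twice_differentiable_onD(1)[OF twice_differentiable_h]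
  by (intro matrix_inv_differentiable[OF open_chart]) (auto simp: invertible_def)

lemma ginv_ext_differentiable:
  assumes y: "y \<in> ext_dom U" shows "(\<lambda>z. ginv (ext_metric J h) z $ i $ j) differentiable (at y)"
proof -
  have p: "pco y \<in> U" using pco_ext_dom[OF y] .
  have "(\<lambda>z. hor_metric_inv J h z $ i' $ j') differentiable (at y)" for i' j'
  proof -
    have "(\<lambda>q. (J q ** matrix_inv (h q)) $ i' $ j') differentiable (at (pco y))"
      unfolding matrix_mult_nth using twice_differentiable_onD(1)[OF twice_differentiable_J p] h_inv_differentiable[OF p]
      by (intro differentiable_sum differentiable_mult) auto
    then show ?thesis
      unfolding hor_metric_inv_nth
      using pd_lift_product(3)[OF h_inv_differentiable[OF p] has_real_derivative_cos2[of 1]]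
        pd_lift_product(3)[OF _ has_real_derivative_sin2[of 1]]
      by (intro differentiable_add) simp_all
  qed
  then have "(\<lambda>z. ext_metric_inv J h z $ i $ j) differentiable (at y)"
    by (cases i; cases j) simp_all
  moreover have "\<And>z. z \<in> ext_dom U \<Longrightarrow> ext_metric_inv J h z $ i $ j = ginv (ext_metric J h) z $ i $ j"
    by (simp add: ginv_ext_metric)
  ultimately show ?thesis by (rule differentiable_transform_within_open[OF open_ext_dom y, rotated])
qed

sublocale ext: metric_chart "ext_dom U" "ext_metric J h"
proof
  show "open (ext_dom U)" by (rule open_ext_dom)
  show "ext_metric J h y ** ginv (ext_metric J h) y = mat 1" if "y \<in> ext_dom U" for y
    using ext_metric_right_inverse[OF that] ginv_ext_metric[OF that] by simp
qed (fact ext_metric_symmetric ext_metric_differentiable pd_ext_metric_differentiable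
       ginv_ext_differentiable)+

lemma Rlow_ext_diag:
  "x \<in> ext_dom U \<Longrightarrow> Rlow (ext_metric J h) x i i k w = 0"
  "x \<in> ext_dom U \<Longrightarrow> Rlow (ext_metric J h) x i j k k = 0"
  using Rlow_antisym_first[of "ext_metric J h" x i i k w] ext.Rlow_antisym_last[of x i j k k] by simp_all

lemma Rlow_ext_None_Some_Some_None:
  "x \<in> ext_dom U \<Longrightarrow> Rlow (ext_metric J h) x None (Some e) (Some f) None = ext_metric J h x $ Some e $ Some f"
  using Rlow_antisym_first[of "ext_metric J h" x None "Some e" "Some f" None]
    ext.Rlow_antisym_last[of x "Some e" None "Some f" None] Rlow_ext_Some_None_None_Some[of x e f]
  by simp

lemma gv_ext_symmetric: "x \<in> ext_dom U \<Longrightarrow> gv (ext_metric J h) x X Y = gv (ext_metric J h) x Y X"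
  unfolding gv_def using ext_metric_symmetric by (subst sum.swap) (simp add: algebra_simps)

lemma R4_ext_xi:
  assumes x: "x \<in> ext_dom U"
  shows "R4 (ext_metric J h) x ext_xi V V ext_xi = gv (ext_metric J h) x V V - (gv (ext_metric J h) x ext_xi V)^2"
proof -
  have "R4 (ext_metric J h) x ext_xi V V ext_xi
      = (\<Sum>j\<in>UNIV. \<Sum>k\<in>UNIV. V$j * V$k * Rlow (ext_metric J h) x None j k None)"
    unfolding ext_xi_def by (rule R4_axis_first_last)
  also have "\<dots> = (\<Sum>i\<in>UNIV. \<Sum>j\<in>UNIV. V $ Some i * V $ Some j * ext_metric J h x $ Some i $ Some j)"
    by (simp add: sum_UNIV_option Rlow_ext_diag[OF x] Rlow_ext_None_Some_Some_None[OF x])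
  finally show ?thesis unfolding gv_ext_diag gv_ext_xi by simp
qed

lemma xi_section_curvature:
  assumes x: "x \<in> ext_dom U"
    and "gv (ext_metric J h) x X Y = 0"
    and "gv (ext_metric J h) x X X * gv (ext_metric J h) x Y Y \<noteq> 0"
    and "ext_xi = \<alpha> *\<^sub>R X + \<beta> *\<^sub>R Y"
  shows "R4 (ext_metric J h) x X Y Y X / (gv (ext_metric J h) x X X * gv (ext_metric J h) x Y Y) = 1"
  using gv_ext_symmetric[OF x] ext.R4_antisym_last[OF x] _ R4_ext_xi[OF x] assms(2-4)
  by (rule sectional_curvature_xi_section) (simp only: gv_ext_xi, simp add: ext_xi_def)

lemma hor_metric_symmetric: "x \<in> ext_dom U \<Longrightarrow> hor_metric J h x $ c $ d = hor_metric J h x $ d $ c"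
  using ext_metric_symmetric[of x "Some c" "Some d"] by (simp add: ext_metric_Some_Some_hor)

lemma hor_metric_inv_symmetric: "x \<in> ext_dom U \<Longrightarrow> hor_metric_inv J h x $ c $ d = hor_metric_inv J h x $ d $ c"
  using ext.ginv_symmetric[of x "Some c" "Some d"] by (simp add: ginv_ext_metric)

lemma trace_hor_metric_inv_hor_metric:
  assumes x: "x \<in> ext_dom U"
  shows "(\<Sum>e\<in>UNIV. \<Sum>f\<in>UNIV. hor_metric_inv J h x $ e $ f * hor_metric J h x $ e $ f) = 2"
proof -
  have "(\<Sum>e\<in>UNIV. \<Sum>f\<in>UNIV. hor_metric_inv J h x $ e $ f * hor_metric J h x $ e $ f)
      = (\<Sum>e\<in>UNIV. (hor_metric J h x ** hor_metric_inv J h x) $ e $ e)"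
    unfolding matrix_mult_nth using hor_metric_inv_symmetric[OF x] by (simp add: mult.commute)
  then show ?thesis using hor_metric_right_inverse[OF x] by (simp add: mat_def card_UNIV_pair)
qed

lemma sum_ginv_ext:
  "x \<in> ext_dom U \<Longrightarrow> (\<Sum>i\<in>UNIV. \<Sum>j\<in>UNIV. ginv (ext_metric J h) x $ i $ j * F i j)
     = F None None + (\<Sum>c\<in>UNIV. \<Sum>d\<in>UNIV. hor_metric_inv J h x $ c $ d * F (Some c) (Some d))"
  by (simp add: ginv_ext_metric sum_UNIV_option)

lemma rho_ext_axis:
  "x \<in> ext_dom U \<Longrightarrow> rho (ext_metric J h) x (axis i 1) (axis j 1) = Rlow (ext_metric J h) x None i j None
     + (\<Sum>e\<in>UNIV. \<Sum>f\<in>UNIV. hor_metric_inv J h x $ e $ f * Rlow (ext_metric J h) x (Some e) i j (Some f))"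
  unfolding rho_def R4_axis4 by (rule sum_ginv_ext)

lemma tau_ext: "x \<in> ext_dom U \<Longrightarrow> tau (ext_metric J h) x = 4 + hor_scalar_curv J h x"
  unfolding tau_def sum_ginv_ext rho_ext_axis hor_scalar_curv_def
  using trace_hor_metric_inv_hor_metric
  by (simp add: Rlow_ext_diag Rlow_ext_Some_None_None_Some Rlow_ext_None_Some_Some_None
      ext_metric_Some_Some_hor sum.distrib distrib_left)

lemma rhostar_ext_axis:
  "x \<in> ext_dom U \<Longrightarrow> rhostar (ext_metric J h) (ext_phi J) x (axis k 1) Z =
     (\<Sum>e\<in>UNIV. \<Sum>f\<in>UNIV. hor_metric_inv J h x $ e $ f *
        R4 (ext_metric J h) x (axis (Some e) 1) (axis k 1) Z (ext_phi J x *v axis (Some f) 1))"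
  unfolding rhostar_def by (subst sum_ginv_ext) (simp_all add: R4_eq_Rlow)

lemma R4_ext_phi_phi:
  assumes x: "x \<in> ext_dom U"
  shows "R4 (ext_metric J h) x (axis (Some e) 1) (axis (Some c) 1) (ext_phi J x *v axis (Some d) 1) (ext_phi J x *v axis (Some f) 1)
     = det2 a b (J (pco x)) * Rlow (ext_metric J h) x (Some e) (Some c) (Some d) (Some f)"
proof -
  let ?R = "Rlow (ext_metric J h) x (Some e) (Some c)"
  have "R4 (ext_metric J h) x (axis (Some e) 1) (axis (Some c) 1) (ext_phi J x *v axis (Some d) 1) (ext_phi J x *v axis (Some f) 1)
      = (\<Sum>k\<in>UNIV. (ext_phi J x *v axis (Some d) 1) $ k * (\<Sum>w\<in>UNIV. (ext_phi J x *v axis (Some f) 1) $ w * ?R k w))"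
    unfolding R4_axis_axis by (simp only: sum_distrib_left mult.assoc)
  also have "\<dots> = (\<Sum>m\<in>UNIV. J (pco x) $ m $ d * (\<Sum>w\<in>UNIV. J (pco x) $ w $ f * ?R (Some m) (Some w)))"
    by (simp only: sum_ext_phi_axis)
  also have "\<dots> = (\<Sum>m\<in>UNIV. \<Sum>w\<in>UNIV. J (pco x) $ m $ d * J (pco x) $ w $ f * ?R (Some m) (Some w))"
    by (simp only: sum_distrib_left mult.assoc)
  also have "\<dots> = det2 a b (J (pco x)) * Rlow (ext_metric J h) x (Some e) (Some c) (Some d) (Some f)"
    by (rule sum_pair_alternating) (rule ext.Rlow_antisym_last[OF x])
  finally show ?thesis .
qed

lemma taustarstar_ext: "x \<in> ext_dom U \<Longrightarrow> taustarstar (ext_metric J h) (ext_phi J) x = hor_scalar_curv J h x"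
  unfolding taustarstar_def sum_ginv_ext rhostar_ext_axis hor_scalar_curv_def
  using trace_det_of_square_minus_one(2)[OF J_square[OF pco_ext_dom]]
  by (simp add: R4_ext_phi_phi)

lemma Rlow_ext_horizontal:
  assumes x: "x \<in> ext_dom U"
  shows "Rlow (ext_metric J h) x (Some e) (Some c) (Some m) (Some w) =
     Rlow (ext_metric J h) x (Some a) (Some b) (Some b) (Some a) * levi_civita a e c * levi_civita a w m"
proof -
  have s1: "Rlow (ext_metric J h) x (Some b) (Some a) m' w' = - Rlow (ext_metric J h) x (Some a) (Some b) m' w'" for m' w'
    by (rule Rlow_antisym_first)
  have s2: "Rlow (ext_metric J h) x i' j' (Some a) (Some b) = - Rlow (ext_metric J h) x i' j' (Some b) (Some a)" for i' j'
    by (rule ext.Rlow_antisym_last[OF x])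
  show ?thesis
    using pair_cases[of e] pair_cases[of c] pair_cases[of m] pair_cases[of w] pair_neq
    by (auto simp: levi_civita_def Rlow_ext_diag[OF x] s1 s2)
qed

lemma taustar_ext:
  "x \<in> ext_dom U \<Longrightarrow> taustar (ext_metric J h) (ext_phi J) x =
     (\<Sum>e\<in>UNIV. \<Sum>f\<in>UNIV. hor_metric_inv J h x $ e $ f * (\<Sum>g\<in>UNIV. J (pco x) $ g $ f * hor_metric J h x $ e $ g))
   + (\<Sum>c\<in>UNIV. \<Sum>d\<in>UNIV. hor_metric_inv J h x $ c $ d * (\<Sum>e\<in>UNIV. \<Sum>f\<in>UNIV. hor_metric_inv J h x $ e $ f *
        (\<Sum>g\<in>UNIV. J (pco x) $ g $ f * Rlow (ext_metric J h) x (Some e) (Some c) (Some d) (Some g))))"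
  unfolding taustar_def sum_ginv_ext rhostar_ext_axis R4_axis_axis_axis sum_ext_phi_axis
  by (simp add: Rlow_ext_Some_None_None_Some ext_metric_Some_Some_hor)

lemma taustar_ext_zero:
  assumes x: "x \<in> ext_dom U" shows "taustar (ext_metric J h) (ext_phi J) x = 0"
proof -
  let ?A = "hor_metric J h x" and ?B = "hor_metric_inv J h x" and ?J = "J (pco x)"
  have A: "?A $ b $ a = ?A $ a $ b" and B: "?B $ b $ a = ?B $ a $ b"
    using hor_metric_symmetric[OF x] hor_metric_inv_symmetric[OF x] by blast+
  have AB: "?A $ i $ a * ?B $ a $ j + ?A $ i $ b * ?B $ b $ j = (if i = j then 1 else 0)" for i j
    using arg_cong[OF hor_metric_right_inverse[OF x], of "\<lambda>M. M $ i $ j"]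
    by (simp add: matrix_mult_nth_pair mat_def)
  have AB_aa: "?A $ a $ a * ?B $ a $ a + ?A $ a $ b * ?B $ b $ a = 1"
    and AB_bb: "?A $ b $ a * ?B $ a $ b + ?A $ b $ b * ?B $ b $ b = 1"
    and AB_ab: "?A $ a $ a * ?B $ a $ b + ?A $ a $ b * ?B $ b $ b = 0"
    and AB_ba: "?A $ b $ a * ?B $ a $ a + ?A $ b $ b * ?B $ b $ a = 0"
    using AB[of a a] AB[of b b] AB[of a b] AB[of b a] pair_neq by simp_all
  note trJ = trace_det_of_square_minus_one(1)[OF J_square[OF pco_ext_dom[OF x]]]
  define Q where "Q = Rlow (ext_metric J h) x (Some a) (Some b) (Some b) (Some a)"
  have R: "Rlow (ext_metric J h) x (Some e) (Some c) (Some m) (Some w) = Q * levi_civita a e c * levi_civita a w m"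
    for e c m w
    unfolding Q_def by (rule Rlow_ext_horizontal[OF x])
  show ?thesis
    unfolding taustar_ext[OF x] R
    apply (simp add: sum_UNIV_pair levi_civita_def pair_neq pair_neq[symmetric] A B)
    using AB_aa AB_bb AB_ab AB_ba trJ A B by algebra
qed

lemma taustarstar_ext_eq_tau: "x \<in> ext_dom U \<Longrightarrow> taustarstar (ext_metric J h) (ext_phi J) x = tau (ext_metric J h) x - 4"
  by (simp add: taustarstar_ext tau_ext)

end

theorem proposition4p5:
  fixes U :: "(real^'n::finite) set" and J h :: "real^'n \<Rightarrow> real^'n^'n" and k' :: real
  assumes "CARD('n) = 2"
    and "almost_norden U J h"
    and "const_sec_curv U h k'"
  shows "(\<exists>c. \<forall>x\<in>ext_dom U. \<forall>X Y.
            gv (ext_metric J h) x X Y = 0 \<and>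
            gv (ext_metric J h) x X X * gv (ext_metric J h) x Y Y \<noteq> 0 \<and>
            (\<exists>a b. ext_xi = a *\<^sub>R X + b *\<^sub>R Y) \<longrightarrow>
            R4 (ext_metric J h) x X Y Y X /
              (gv (ext_metric J h) x X X * gv (ext_metric J h) x Y Y) = c)
       \<and> (\<forall>x\<in>ext_dom U. taustar (ext_metric J h) (ext_phi J) x = 0)
       \<and> (\<forall>x\<in>ext_dom U. taustarstar (ext_metric J h) (ext_phi J) x = tau (ext_metric J h) x - 4)"
proof -
  obtain a b :: 'n where "a \<noteq> b" "(UNIV :: 'n set) = {a, b}"
    using assms(1) card_2_iff by metis
  then interpret almost_norden_surface U J h a b
    using assms(2) by unfold_locales
  have "\<forall>x\<in>ext_dom U. \<forall>X Y.
            gv (ext_metric J h) x X Y = 0 \<and>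
            gv (ext_metric J h) x X X * gv (ext_metric J h) x Y Y \<noteq> 0 \<and>
            (\<exists>a b. ext_xi = a *\<^sub>R X + b *\<^sub>R Y) \<longrightarrow>
            R4 (ext_metric J h) x X Y Y X /
              (gv (ext_metric J h) x X X * gv (ext_metric J h) x Y Y) = 1"
    using xi_section_curvature by blast
  then show ?thesis
    using taustar_ext_zero taustarstar_ext_eq_tau by blast
qed

end
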